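(* Let $q$ be a power of $2$, let $V$ be a $2m$-dimensional vector space over $\mathbb{F}_q$, let $Q$ be a non-degenerate quadratic form on $V$ with associated (alternating) bilinear form $\beta_Q$, so that $\mathcal{C}(Q)\cong\mathrm{O}^\epsilon_{2m}(q)$ for some sign $\epsilon$. Let $X\in\mathcal{C}(Q)$ be semisimple with minimal polynomial $f\in\Phi$. (i) If $f\in\Phi_1$, then $X=I$ and $C_{\mathcal{C}(Q)}(X)=\mathcal{C}(Q)$. (ii) If $f\in\Phi_2\cup\Phi_3$, then $X^{{\rm GL}(V)}\cap\mathcal{C}(Q)=X^{\mathcal{C}(Q)}$ (a single $\mathcal{C}(Q)$-class), and $C_{\mathcal{C}(Q)}(X)=C_{\mathcal{C}(\beta_Q)}(X)$; in particular $C_{\mathrm{O}^\epsilon_{2m}(q)}(X)=C_{{\rm Sp}_{2m}(q)}(X)$.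
   Context: $\beta_Q(v,w)=Q(v+w)-Q(v)-Q(w)$; $Q$ non-degenerate means $\beta_Q$ non-degenerate. $\mathcal{C}(Q)=\{g\in{\rm GL}(V):Q(vg)=Q(v)\}$, $\mathcal{C}(\beta_Q)$ the isometry group of $\beta_Q$ (a symplectic group). Semisimple means odd order. For monic $f=t^d+\cdots+a_0$ with $a_0\ne0$, $f^*(t)=a_0^{-1}t^df(t^{-1})$. $\Phi_1=\{t+1\}$ (monic irreducible self-dual of degree 1); $\Phi_2$: $gg^*$ with $g$ monic irreducible, $g\ne g^*$; $\Phi_3$: monic irreducible $f=f^*$ with $\deg f>1$; $\Phi=\Phi_1\cup\Phi_2\cup\Phi_3$. $X^H$ is the conjugacy class of $X$ in $H$. *)

theory Defs
  imports "HOL-Analysis.Analysis" "HOL-Computational_Algebra.Polynomial_Factorial"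
begin

text \<open>Vectors of V = F^n are row vectors 'a^'n; g acts on the right: v g = v v* g.\<close>

definition mat_pow :: "'a::comm_ring_1^'n^'n \<Rightarrow> nat \<Rightarrow> 'a^'n^'n" where
  "mat_pow A k = ((\<lambda>B. B ** A) ^^ k) (mat 1)"

definition poly_mat :: "'a::comm_ring_1 poly \<Rightarrow> 'a^'n^'n \<Rightarrow> 'a^'n^'n" where
  "poly_mat f A = (\<Sum>i\<le>degree f. mat (coeff f i) ** mat_pow A i)"

definition is_min_poly :: "'a::field^'n^'n \<Rightarrow> 'a poly \<Rightarrow> bool" where
  "is_min_poly A f \<longleftrightarrow> lead_coeff f = 1 \<and> poly_mat f A = 0 \<and>
     (\<forall>g. g \<noteq> 0 \<and> poly_mat g A = 0 \<longrightarrow> degree f \<le> degree g)"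

definition mat_order :: "'a::comm_ring_1^'n^'n \<Rightarrow> nat" where
  "mat_order A = (LEAST k. 0 < k \<and> mat_pow A k = mat 1)"

definition semisimple :: "'a::comm_ring_1^'n^'n \<Rightarrow> bool" where
  "semisimple A \<longleftrightarrow> odd (mat_order A)"

definition polar :: "('a::field^'n \<Rightarrow> 'a) \<Rightarrow> 'a^'n \<Rightarrow> 'a^'n \<Rightarrow> 'a" where
  "polar Q v w = Q (v + w) - Q v - Q w"

definition bilinear_form :: "('a::field^'n \<Rightarrow> 'a^'n \<Rightarrow> 'a) \<Rightarrow> bool" where
  "bilinear_form B \<longleftrightarrow>
     (\<forall>u v w. B (u + v) w = B u w + B v w) \<and> (\<forall>u v w. B u (v + w) = B u v + B u w) \<and>
     (\<forall>c v w. B (c *s v) w = c * B v w) \<and> (\<forall>c v w. B v (c *s w) = c * B v w)"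

definition quadratic_form :: "('a::field^'n \<Rightarrow> 'a) \<Rightarrow> bool" where
  "quadratic_form Q \<longleftrightarrow> (\<forall>c v. Q (c *s v) = c^2 * Q v) \<and> bilinear_form (polar Q)"

definition nondegenerate :: "('a::field^'n \<Rightarrow> 'a^'n \<Rightarrow> 'a) \<Rightarrow> bool" where
  "nondegenerate B \<longleftrightarrow> (\<forall>v. (\<forall>w. B v w = 0) \<longrightarrow> v = 0)"

definition GLV :: "('a::field^'n^'n) set" where
  "GLV = {g. invertible g}"

definition isom_Q :: "('a::field^'n \<Rightarrow> 'a) \<Rightarrow> ('a^'n^'n) set" where
  "isom_Q Q = {g. invertible g \<and> (\<forall>v. Q (v v* g) = Q v)}"

definition isom_B :: "('a::field^'n \<Rightarrow> 'a^'n \<Rightarrow> 'a) \<Rightarrow> ('a^'n^'n) set" where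
  "isom_B B = {g. invertible g \<and> (\<forall>v w. B (v v* g) (w v* g) = B v w)}"

definition centralizer :: "('a::field^'n^'n) set \<Rightarrow> 'a^'n^'n \<Rightarrow> ('a^'n^'n) set" where
  "centralizer H X = {g \<in> H. g ** X = X ** g}"

definition conj_class :: "('a::field^'n^'n) set \<Rightarrow> 'a^'n^'n \<Rightarrow> ('a^'n^'n) set" where
  "conj_class H X = {matrix_inv g ** X ** g | g. g \<in> H}"

definition dual_poly :: "'a::field poly \<Rightarrow> 'a poly" where
  "dual_poly f = smult (inverse (coeff f 0)) (reflect_poly f)"

definition Phi1 :: "'a::field poly set" where
  "Phi1 = {[:1, 1:]}"

definition Phi2 :: "'a::field poly set" where
  "Phi2 = {g * dual_poly g | g. lead_coeff g = 1 \<and> irreducible g \<and> coeff g 0 \<noteq> 0 \<and> g \<noteq> dual_poly g}"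

definition Phi3 :: "'a::field poly set" where
  "Phi3 = {f. lead_coeff f = 1 \<and> irreducible f \<and> coeff f 0 \<noteq> 0 \<and> f = dual_poly f \<and> degree f > 1}"

definition Phi :: "'a::field poly set" where
  "Phi = Phi1 \<union> Phi2 \<union> Phi3"

end

theory Submission
  imports Defs
begin

(*
  In characteristic 2 a quadratic form Q is recovered from its polar form b along any isometry Z
  without eigenvalue 1: writing u = w (Z + 1) gives Q u = b (w Z, w) + Q (w Z) + Q w = b (w Z, w).
  Hence an element that preserves b and intertwines two such isometries preserves Q. This gives
  the centralizer statement, and reduces the conjugacy statement to: any two nondegenerate
  X-invariant symmetric forms are isometric via an invertible matrix commuting with X (apply it
  to b and to b transported by the conjugating matrix).

  If f = g g*, then V is the sum of the images of two idempotents in F[X] that are totally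
  isotropic for every invariant form; the isometry is the matrix representing one form through
  the other on the first summand and the identity on the second. If f is irreducible and
  self-dual of degree > 1, then K = F[X] is a field with the involution X |-> X^-1, and both forms
  split orthogonally into nondegenerate K-lines. Two such lines are isometric because every
  element of K fixed by the involution is a square, squaring being bijective on a finite field
  of characteristic 2.
*)

lemma of_nat_CARD_eq_0: "of_nat CARD('a::{finite,field}) = (0::'a)"
proof -
  have "(\<Sum>x\<in>(UNIV::'a set). x + 1) = (\<Sum>x\<in>UNIV. x)"
    by (rule sum.reindex_bij_witness[where i="\<lambda>x. x - 1" and j="\<lambda>x. x + 1"]) auto
  then show ?thesis by (simp add: sum.distrib)
qed

lemma two_eq_0_if_card_power_of_two:
  assumes "\<exists>k. CARD('a::{finite,field}) = 2 ^ k"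
  shows "(2::'a) = 0"
proof -
  obtain k where "CARD('a) = 2 ^ k" using assms by blast
  then have "(2::'a) ^ k = 0" using of_nat_CARD_eq_0[where 'a='a] by simp
  then show ?thesis by simp
qed

lemma add_self_eq_0_char2: "(2::'a::ring_1) = 0 \<Longrightarrow> x + x = (0::'a)"
  by (metis mult_2 mult_zero_left)

lemma uminus_eq_self_char2: "(2::'a::ring_1) = 0 \<Longrightarrow> - x = (x::'a)"
  by (metis add_self_eq_0_char2 add_eq_0_iff)

lemma matrix_add_self_eq_0_char2: "(2::'a::ring_1) = 0 \<Longrightarrow> A + A = (0::'a^'n^'m)"
  by (simp add: vec_eq_iff add_self_eq_0_char2)

lemma matrix_uminus_eq_self_char2: "(2::'a::ring_1) = 0 \<Longrightarrow> - A = (A::'a^'n^'m)"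
  by (simp add: vec_eq_iff uminus_eq_self_char2)

lemma mat_add: "mat (a + b) = (mat a + mat b :: 'a::comm_ring_1^'n^'n)"
  by (simp add: vec_eq_iff mat_def)

lemma mat_uminus: "mat (- a) = - (mat a :: 'a::comm_ring_1^'n^'n)"
  by (simp add: vec_eq_iff mat_def)

lemma mat_matrix_mult_nth: "(mat a ** B) $ i $ j = a * (B::'a::comm_ring_1^'n^'n) $ i $ j"
  by (simp add: matrix_matrix_mult_def mat_def if_distrib if_distribR cong: if_cong)

lemma matrix_mat_mult_nth: "(B ** mat a) $ i $ j = a * (B::'a::comm_ring_1^'n^'n) $ i $ j"
  by (simp add: matrix_matrix_mult_def mat_def if_distrib if_distribR mult.commute cong: if_cong)

lemma mat_mult: "mat (a * b) = (mat a ** mat b :: 'a::comm_ring_1^'n^'n)"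
  by (simp add: vec_eq_iff mat_matrix_mult_nth) (simp add: mat_def)

lemma mat_matrix_mult_commute: "mat a ** (B::'a::comm_ring_1^'n^'n) = B ** mat a"
  by (simp add: vec_eq_iff mat_matrix_mult_nth matrix_mat_mult_nth)

lemma matrix_add_rdistrib: "(B + C) ** (A::'a::comm_ring_1^'n^'m) = B ** A + C ** A"
  by (vector matrix_matrix_mult_def sum.distrib[symmetric] field_simps)

lemma matrix_uminus_right: "A ** (- B) = - (A ** (B::'a::comm_ring_1^'n^'m))"
  by (simp add: vec_eq_iff matrix_matrix_mult_def sum_negf)

lemma matrix_uminus_left: "(- A) ** B = - (A ** (B::'a::comm_ring_1^'n^'m))"
  by (simp add: vec_eq_iff matrix_matrix_mult_def sum_negf)

lemma matrix_diff_rdistrib: "(B - C) ** A = B ** A - C ** (A::'a::comm_ring_1^'n^'m)"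
  using matrix_add_rdistrib[of B "- C" A] by (simp add: matrix_uminus_left)

lemma matrix_sum_mult: "(\<Sum>i\<in>S. F i) ** (B::'a::comm_ring_1^'n^'n) = (\<Sum>i\<in>S. F i ** B)"
  by (induction S rule: infinite_finite_induct) (simp_all add: matrix_add_rdistrib)

lemma matrix_mult_sum: "(B::'a::comm_ring_1^'n^'n) ** (\<Sum>i\<in>S. F i) = (\<Sum>i\<in>S. B ** F i)"
  by (induction S rule: infinite_finite_induct) (simp_all add: matrix_add_ldistrib)

lemma vector_matrix_mult_mat: "v v* mat c = c *s (v::'a::comm_ring_1^'n)"
  by (simp add: vec_eq_iff vector_matrix_mult_def mat_def if_distrib if_distribR sum.delta' mult.commute
      cong: if_cong)

lemma vector_matrix_mult_mat_mult: "v v* (mat c ** A) = c *s (v v* (A::'a::field^'m^'n))"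
  by (simp add: vector_matrix_mul_assoc[symmetric] vector_matrix_mult_mat scalar_vector_matrix_assoc)

lemma matrix_eq_rows: "(\<And>v. v v* A = v v* B) \<Longrightarrow> A = (B::'a::comm_ring_1^'m^'n)"
  by (metis matrix_eq transpose_matrix_vector transpose_transpose)

lemma matrix_inv_mult:
  assumes "invertible (A::'a::comm_ring_1^'n^'n)"
  shows "A ** matrix_inv A = mat 1" "matrix_inv A ** A = mat 1"
  using someI_ex[OF assms[unfolded invertible_def]] unfolding matrix_inv_def by auto

lemma left_inverse_imp_matrix_inv:
  assumes "B ** A = mat 1" shows "invertible (A::'a::field^'n^'n)" "matrix_inv A = B"
proof -
  show inv: "invertible A" using assms invertible_left_inverse by blast
  have "matrix_inv A = matrix_inv A ** (A ** B)"
    using assms matrix_left_right_inverse by (metis matrix_mul_rid)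
  also have "\<dots> = B" using matrix_inv_mult(2)[OF inv] by (simp add: matrix_mul_assoc)
  finally show "matrix_inv A = B" .
qed

lemma invertible_if_vector_matrix_mult_eq_0:
  fixes M :: "'a::{field,finite}^'n^'n"
  assumes ker: "\<And>u. u v* M = 0 \<Longrightarrow> u = 0"
  shows "invertible M"
proof -
  have "inj (\<lambda>u. transpose M *v u)"
  proof (rule injI)
    fix u w assume "transpose M *v u = transpose M *v w"
    then have "(u - w) v* M = 0" by (simp add: vector_matrix_mult_diff_distrib)
    then show "u = w" using ker[of "u - w"] by simp
  qed
  then have "invertible (transpose M)"
    using finite_UNIV_inj_surj[OF finite_class.finite_UNIV] invertible_eq_bij bij_def by metis
  then obtain N where "transpose M ** N = mat 1" unfolding invertible_def by blast
  then have "transpose N ** M = mat 1" by (metis matrix_transpose_mul transpose_mat transpose_transpose)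
  then show ?thesis using invertible_left_inverse by blast
qed

lemma additive_homogeneous_imp_matrix:
  fixes k :: "'a::field^'n \<Rightarrow> 'a^'n"
  assumes "\<And>x y. k (x + y) = k x + k y" and "\<And>c x. k (c *s x) = c *s k x"
  obtains M where "\<And>u. u v* M = k u"
proof -
  have "Vector_Spaces.linear (*s) (*s) k"
    unfolding Vector_Spaces.linear_iff using vec.vector_space_axioms assms by blast
  then have "u v* transpose (matrix k) = k u" for u
    using matrix_works by simp
  then show ?thesis using that by blast
qed

lemma mat_pow_0[simp]: "mat_pow A 0 = mat 1"
  by (simp add: mat_pow_def)

lemma mat_pow_Suc: "mat_pow A (Suc k) = mat_pow A k ** A"
  by (simp add: mat_pow_def)

lemma mat_pow_commute: "mat_pow A k ** A = A ** mat_pow A k"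
  by (induction k) (simp_all add: mat_pow_Suc matrix_mul_assoc[symmetric])

lemma mat_pow_add: "mat_pow A (i + j) = mat_pow A i ** mat_pow A j"
  by (induction j) (simp_all add: mat_pow_Suc matrix_mul_assoc)

lemma mat_pow_left_inverse:
  assumes "B ** A = mat (1::'a::comm_ring_1)"
  shows "mat_pow B j ** mat_pow A j = mat 1"
proof (induction j)
  case (Suc j)
  have "mat_pow B (Suc j) ** mat_pow A (Suc j) = mat_pow B j ** (B ** A) ** mat_pow A j"
    by (simp add: mat_pow_Suc mat_pow_commute matrix_mul_assoc)
  then show ?case using Suc assms by simp
qed simp

lemma poly_mat_eq_sum_atMost:
  assumes "degree p \<le> N"
  shows "poly_mat p A = (\<Sum>i\<le>N. mat (coeff p i) ** mat_pow A i)"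
proof -
  have "(\<Sum>i\<le>N. mat (coeff p i) ** mat_pow A i) = (\<Sum>i\<le>degree p. mat (coeff p i) ** mat_pow A i)"
    by (rule sum.mono_neutral_right) (use assms in \<open>auto simp: coeff_eq_0\<close>)
  then show ?thesis by (simp add: poly_mat_def)
qed

lemma poly_mat_pCons: "poly_mat (pCons a p) A = mat a + poly_mat p A ** A"
proof -
  have "poly_mat (pCons a p) A = (\<Sum>i\<le>Suc (degree p). mat (coeff (pCons a p) i) ** mat_pow A i)"
    by (rule poly_mat_eq_sum_atMost) simp
  also have "\<dots> = mat a + (\<Sum>i\<le>degree p. mat (coeff p i) ** (mat_pow A i ** A))"
    unfolding sum.atMost_Suc_shift by (simp add: mat_pow_Suc)
  also have "\<dots> = mat a + poly_mat p A ** A"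
    by (simp add: poly_mat_def matrix_sum_mult matrix_mul_assoc)
  finally show ?thesis .
qed

lemma poly_mat_0 [simp]: "poly_mat 0 A = 0"
  by (simp add: poly_mat_def)

lemma poly_mat_const [simp]: "poly_mat [:a:] A = mat a"
  using poly_mat_pCons[of a 0 A] by simp

lemma poly_mat_1 [simp]: "poly_mat 1 A = mat 1"
  by (simp add: one_pCons)

lemma poly_mat_t: "poly_mat [:0, 1:] A = A"
  using poly_mat_pCons[of 0 "[:1:]" A] by simp

lemma poly_mat_t_plus_1: "poly_mat [:1, 1:] A = A + mat 1"
  using poly_mat_pCons[of 1 "[:1:]" A] by (simp add: add.commute)

lemma poly_mat_monom: "poly_mat (monom 1 k) A = mat_pow A k"
  by (induction k) (simp_all add: monom_Suc poly_mat_pCons mat_pow_Suc)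

lemma poly_mat_commute_self: "poly_mat p A ** A = A ** poly_mat p A"
  by (induction p) (simp_all add: poly_mat_pCons matrix_add_rdistrib matrix_add_ldistrib
      mat_matrix_mult_commute, metis matrix_mul_assoc)

lemma poly_mat_add: "poly_mat (p + q) A = poly_mat p A + poly_mat q A"
proof -
  let ?N = "max (degree p) (degree q)"
  have "poly_mat (p + q) A = (\<Sum>i\<le>?N. mat (coeff (p + q) i) ** mat_pow A i)"
    by (rule poly_mat_eq_sum_atMost) (simp add: degree_add_le)
  also have "\<dots> = (\<Sum>i\<le>?N. mat (coeff p i) ** mat_pow A i) + (\<Sum>i\<le>?N. mat (coeff q i) ** mat_pow A i)"
    by (simp add: mat_add matrix_add_rdistrib sum.distrib)
  also have "\<dots> = poly_mat p A + poly_mat q A"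
    by (simp add: poly_mat_eq_sum_atMost[symmetric])
  finally show ?thesis .
qed

lemma poly_mat_smult: "poly_mat (smult a p) A = mat a ** poly_mat p A"
proof -
  have "poly_mat (smult a p) A = (\<Sum>i\<le>degree p. mat (coeff (smult a p) i) ** mat_pow A i)"
    by (rule poly_mat_eq_sum_atMost) (simp add: degree_smult_le)
  also have "\<dots> = mat a ** poly_mat p A"
    by (simp add: poly_mat_def matrix_mult_sum mat_mult matrix_mul_assoc)
  finally show ?thesis .
qed

lemma poly_mat_mult: "poly_mat (p * q) A = poly_mat p A ** poly_mat q A"
proof (induction p)
  case (pCons a p)
  have "poly_mat (pCons a p * q) A = mat a ** poly_mat q A + poly_mat (p * q) A ** A"
    by (simp add: poly_mat_add poly_mat_smult poly_mat_pCons)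
  also have "poly_mat (p * q) A ** A = poly_mat p A ** (A ** poly_mat q A)"
    by (simp add: pCons.IH matrix_mul_assoc[symmetric] poly_mat_commute_self)
  also have "mat a ** poly_mat q A + \<dots> = poly_mat (pCons a p) A ** poly_mat q A"
    by (simp add: poly_mat_pCons matrix_add_rdistrib matrix_mul_assoc)
  finally show ?case .
qed simp

lemma poly_mat_commute: "poly_mat p A ** poly_mat q A = poly_mat q A ** poly_mat p A"
  by (metis poly_mat_mult mult.commute)

lemma poly_mat_uminus: "poly_mat (- p) A = - poly_mat p A"
  using poly_mat_add[of p "- p" A] by (simp add: eq_neg_iff_add_eq_0 add.commute)

lemma poly_mat_diff: "poly_mat (p - q) A = poly_mat p A - poly_mat q A"
  using poly_mat_add[of p "- q" A] by (simp add: poly_mat_uminus)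

lemma poly_mat_pcompose: "poly_mat p (poly_mat r A) = poly_mat (pcompose p r) A"
  by (induction p)
    (simp_all add: poly_mat_pCons pcompose_pCons poly_mat_add poly_mat_mult poly_mat_commute)

lemma poly_mat_reflect_poly:
  fixes A :: "'a::comm_ring_1^'n^'n"
  assumes "B ** A = mat 1"
  shows "poly_mat (reflect_poly p) B = mat_pow B (degree p) ** poly_mat p A"
proof -
  let ?d = "degree p"
  have "poly_mat (reflect_poly p) B = (\<Sum>i\<le>?d. mat (coeff p (?d - i)) ** mat_pow B i)"
    by (simp add: poly_mat_eq_sum_atMost[OF degree_reflect_poly_le] coeff_reflect_poly)
  also have "\<dots> = (\<Sum>j\<le>?d. mat (coeff p j) ** mat_pow B (?d - j))"
    using sum.atLeastAtMost_rev[of "\<lambda>i. mat (coeff p (?d - i)) ** mat_pow B i" 0 ?d]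
    by (simp add: atLeast0AtMost)
  also have "\<dots> = (\<Sum>j\<le>?d. mat_pow B ?d ** (mat (coeff p j) ** mat_pow A j))"
  proof (rule sum.cong)
    fix j assume "j \<in> {..?d}"
    then have "mat_pow B ?d ** mat_pow A j = mat_pow B (?d - j) ** (mat_pow B j ** mat_pow A j)"
      by (simp add: mat_pow_add[symmetric] matrix_mul_assoc)
    then show "mat (coeff p j) ** mat_pow B (?d - j) = mat_pow B ?d ** (mat (coeff p j) ** mat_pow A j)"
      using mat_pow_left_inverse[OF assms, of j]
      by (simp add: matrix_mul_assoc mat_matrix_mult_commute)
  qed simp
  also have "\<dots> = mat_pow B ?d ** poly_mat p A"
    by (simp add: poly_mat_def matrix_mult_sum)
  finally show ?thesis .
qed

lemma poly_mat_left_inverse: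
  assumes "poly_mat f (A::'a::field^'n^'n) = 0" and "coeff f 0 \<noteq> 0"
  obtains r where "poly_mat r A ** A = mat 1"
proof -
  obtain q where "f = pCons (coeff f 0) q"
    by (metis coeff_pCons_0 pCons_cases)
  then have "poly_mat q A ** A = - mat (coeff f 0)"
    using assms(1) poly_mat_pCons by (metis add.commute eq_neg_iff_add_eq_0)
  moreover define c where "c = - inverse (coeff f 0)"
  ultimately have "poly_mat (smult c q) A ** A = mat c ** - mat (coeff f 0)"
    by (simp only: poly_mat_smult matrix_mul_assoc[symmetric])
  also have "\<dots> = mat 1"
    using assms(2) by (simp add: c_def matrix_uminus_right mat_mult[symmetric] mat_uminus[symmetric])
  finally have "poly_mat (smult c q) A ** A = mat 1" .
  then show ?thesis using that by blast
qed

lemma matrix_inv_eq_poly_mat: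
  assumes "poly_mat f (A::'a::field^'n^'n) = 0" and "coeff f 0 \<noteq> 0"
  obtains r where "matrix_inv A = poly_mat r A" and "invertible A"
proof -
  obtain r where "poly_mat r A ** A = mat 1" using poly_mat_left_inverse[OF assms] .
  then show ?thesis using that left_inverse_imp_matrix_inv by metis
qed

lemma irreducible_bezout:
  fixes f p :: "'a::field poly"
  assumes irr: "irreducible f" and nd: "\<not> f dvd p"
  obtains u v where "u * p + v * f = 1"
proof -
  define S where "S = {g. g \<noteq> 0 \<and> (\<exists>u v. g = u * p + v * f)}"
  have "p = 1 * p + 0 * f" "p \<noteq> 0" using nd by auto
  then have "p \<in> S" unfolding S_def by blast
  then obtain g where gS: "g \<in> S" and gmin: "\<And>h. h \<in> S \<Longrightarrow> degree g \<le> degree h"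
    using ex_has_least_nat[of "\<lambda>g. g \<in> S" p degree] by blast
  obtain u v where guv: "g = u * p + v * f" and g0: "g \<noteq> 0" using gS unfolding S_def by blast
  \<comment> \<open>a combination of least degree divides every combination, by division with remainder\<close>
  have gdvd: "g dvd a * p + b * f" for a b
  proof (rule ccontr)
    let ?q = "a * p + b * f"
    assume "\<not> g dvd ?q"
    then have m0: "?q mod g \<noteq> 0" by (simp add: mod_eq_0_iff_dvd)
    have "?q mod g = (a - (?q div g) * u) * p + (b - (?q div g) * v) * f"
      using guv by (simp add: minus_div_mult_eq_mod[symmetric] algebra_simps)
    then have "?q mod g \<in> S" using m0 unfolding S_def by blast
    then have "degree g \<le> degree (?q mod g)" by (rule gmin)
    moreover have "degree (?q mod g) < degree g" using degree_mod_less[OF g0, of ?q] m0 by simp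
    ultimately show False by simp
  qed
  have "g dvd f" using gdvd[of 0 1] by simp
  then obtain k where fk: "f = g * k" by (elim dvdE)
  have "g dvd p" using gdvd[of 1 0] by simp
  have "\<not> is_unit k"
  proof
    assume "is_unit k"
    then have "f dvd g" using fk by (metis dvd_mult_unit_iff dvd_refl)
    with \<open>g dvd p\<close> nd show False using dvd_trans by blast
  qed
  then have "is_unit g" using irr fk by (auto simp: irreducible_def)
  then obtain w where "1 = g * w" by (elim dvdE)
  then have "(w * u) * p + (w * v) * f = 1" using guv by (simp add: algebra_simps)
  then show ?thesis using that by blast
qed

lemma invertible_poly_mat_if_not_dvd:
  assumes "poly_mat f (A::'a::field^'n^'n) = 0" and "irreducible p" and "\<not> p dvd f"
  shows "invertible (poly_mat p A)"
proof -
  obtain u v where "u * f + v * p = 1"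
    using irreducible_bezout[OF assms(2,3)] by blast
  then have "poly_mat v A ** poly_mat p A = mat 1"
    using assms(1) by (metis poly_mat_1 poly_mat_add poly_mat_mult times0_right add_0)
  then show ?thesis by (rule left_inverse_imp_matrix_inv)
qed

context
  fixes C :: "'a::field^'n \<Rightarrow> 'a^'n \<Rightarrow> 'a"
  assumes bil: "bilinear_form C"
begin

lemma bilinear_add_left: "C (u + v) w = C u w + C v w"
  using bil by (simp add: bilinear_form_def)

lemma bilinear_add_right: "C u (v + w) = C u v + C u w"
  using bil by (simp add: bilinear_form_def)

lemma bilinear_scale_left: "C (c *s v) w = c * C v w"
  using bil by (simp add: bilinear_form_def)

lemma bilinear_scale_right: "C v (c *s w) = c * C v w"
  using bil by (simp add: bilinear_form_def)

lemma bilinear_zero_left [simp]: "C 0 w = 0"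
  using bilinear_scale_left[of 0 0 w] by simp

lemma bilinear_zero_right [simp]: "C v 0 = 0"
  using bilinear_scale_right[of v 0 0] by simp

lemma bilinear_diff_left: "C (u - v) w = C u w - C v w"
  using bilinear_add_left[of "u - v" v w] by simp

lemma bilinear_diff_right: "C u (v - w) = C u v - C u w"
  using bilinear_add_right[of u "v - w" w] by simp

lemma bilinear_sum_left: "C (\<Sum>i\<in>S. g i) w = (\<Sum>i\<in>S. C (g i) w)"
  by (induction S rule: infinite_finite_induct) (simp_all add: bilinear_add_left)

lemma bilinear_sum_right: "C w (\<Sum>i\<in>S. g i) = (\<Sum>i\<in>S. C w (g i))"
  by (induction S rule: infinite_finite_induct) (simp_all add: bilinear_add_right)

lemma bilinear_orthogonal_sum:
  "C x y' = 0 \<Longrightarrow> C y x' = 0 \<Longrightarrow> C (x + y) (x' + y') = C x x' + C y y'"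
  by (simp add: bilinear_add_left bilinear_add_right)

lemma bilinear_form_pullback: "bilinear_form (\<lambda>a b. C (a v* g) (b v* g))"
  using bil unfolding bilinear_form_def
  by (simp add: vector_matrix_left_distrib scalar_vector_matrix_assoc)

lemma bilinear_form_poly_mat_adjoint:
  assumes inv: "\<And>v w. C (v v* X) (w v* X) = C v w" and "X ** Y = mat 1" "Y ** X = mat 1"
  shows "C (v v* poly_mat p X) w = C v (w v* poly_mat p Y)"
proof (induction p arbitrary: w)
  case (pCons a p)
  have shift: "C (u v* X) w' = C u (w' v* Y)" for u w'
    using inv[of u "w' v* Y"] assms(3) by (simp add: vector_matrix_mul_assoc)
  have "C (v v* poly_mat (pCons a p) X) w = C (a *s v + (v v* poly_mat p X) v* X) w"
    by (simp add: poly_mat_pCons vector_matrix_mult_add_rdistrib vector_matrix_mult_mat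
        vector_matrix_mul_assoc)
  also have "\<dots> = a * C v w + C v ((w v* Y) v* poly_mat p Y)"
    by (simp add: bilinear_add_left bilinear_scale_left shift pCons.IH)
  also have "\<dots> = C v (w v* poly_mat (pCons a p) Y)"
    by (simp add: poly_mat_pCons vector_matrix_mult_add_rdistrib vector_matrix_mult_mat
        vector_matrix_mul_assoc poly_mat_commute_self bilinear_add_right bilinear_scale_right)
  finally show ?case .
qed simp

end

definition symmetric_invariant_form :: "('a::field^'n \<Rightarrow> 'a^'n \<Rightarrow> 'a) \<Rightarrow> 'a^'n^'n \<Rightarrow> bool" where
  "symmetric_invariant_form C X \<longleftrightarrow>
     bilinear_form C \<and> (\<forall>v w. C v w = C w v) \<and> (\<forall>v w. C (v v* X) (w v* X) = C v w)"

lemma symmetric_invariant_formD: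
  assumes "symmetric_invariant_form C X"
  shows "bilinear_form C" "C v w = C w v" "C (v v* X) (w v* X) = C v w"
  using assms by (auto simp: symmetric_invariant_form_def)

definition isometric_via_centralizer ::
  "'a::field^'n^'n \<Rightarrow> ('a^'n \<Rightarrow> 'a^'n \<Rightarrow> 'a) \<Rightarrow> ('a^'n \<Rightarrow> 'a^'n \<Rightarrow> 'a) \<Rightarrow> bool" where
  "isometric_via_centralizer X C C' \<longleftrightarrow>
     (\<exists>k. invertible k \<and> k ** X = X ** k \<and> (\<forall>a b. C (a v* k) (b v* k) = C' a b))"

definition gram_matrix :: "('a::field^'n \<Rightarrow> 'a^'n \<Rightarrow> 'a) \<Rightarrow> 'a^'n^'n" where
  "gram_matrix C = (\<chi> i j. C (axis i 1) (axis j 1))"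

lemma bilinear_form_gram_matrix:
  assumes "bilinear_form (C::'a::field^'n::finite \<Rightarrow> 'a^'n \<Rightarrow> 'a)"
  shows "C x w = (\<Sum>j\<in>UNIV. (x v* gram_matrix C) $ j * w $ j)"
proof -
  have "C x w = C (\<Sum>i\<in>UNIV. x $ i *s axis i 1) (\<Sum>j\<in>UNIV. w $ j *s axis j 1)"
    by (simp add: basis_expansion)
  also have "\<dots> = (\<Sum>i\<in>UNIV. \<Sum>j\<in>UNIV. x $ i * (w $ j * C (axis i 1) (axis j 1)))"
    using assms by (simp add: bilinear_sum_left bilinear_sum_right bilinear_scale_left
        bilinear_scale_right)
  also have "\<dots> = (\<Sum>j\<in>UNIV. (x v* gram_matrix C) $ j * w $ j)"
    by (subst sum.swap)
      (simp add: vector_matrix_mult_def gram_matrix_def sum_distrib_left sum_distrib_right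
        algebra_simps)
  finally show ?thesis .
qed

lemma invertible_gram_matrix:
  assumes "bilinear_form (C::'a::{field,finite}^'n::finite \<Rightarrow> 'a^'n \<Rightarrow> 'a)" and "nondegenerate C"
  shows "invertible (gram_matrix C)"
proof (rule invertible_if_vector_matrix_mult_eq_0)
  fix u assume "u v* gram_matrix C = 0"
  then have "\<forall>w. C u w = 0" using bilinear_form_gram_matrix[OF assms(1)] by simp
  then show "u = 0" using assms(2) unfolding nondegenerate_def by blast
qed

lemma invertible_if_isometry:
  fixes k :: "'a::{field,finite}^'n::finite^'n"
  assumes "bilinear_form C" "nondegenerate C'" "\<And>a b. C (a v* k) (b v* k) = C' a b"
  shows "invertible k"
proof (rule invertible_if_vector_matrix_mult_eq_0)
  fix a assume "a v* k = 0"
  then have "\<forall>b. C' a b = 0" using assms(1,3) by (metis bilinear_zero_left)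
  then show "a = 0" using assms(2) unfolding nondegenerate_def by blast
qed

lemma nondegenerate_form_represents:
  fixes C :: "'a::{field,finite}^'n::finite \<Rightarrow> 'a^'n \<Rightarrow> 'a"
  assumes "bilinear_form C" and "nondegenerate C" and "bilinear_form C'"
  obtains S where "\<And>a w. C (a v* S) w = C' a w"
proof -
  define S where "S = gram_matrix C' ** matrix_inv (gram_matrix C)"
  have "S ** gram_matrix C = gram_matrix C'"
    unfolding S_def using matrix_inv_mult(2)[OF invertible_gram_matrix[OF assms(1,2)]]
    by (simp add: matrix_mul_assoc[symmetric])
  then have "C (a v* S) w = C' a w" for a w
    using bilinear_form_gram_matrix[OF assms(1), of "a v* S"]
      bilinear_form_gram_matrix[OF assms(3), of a]
    by (simp add: vector_matrix_mul_assoc)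
  then show ?thesis using that by blast
qed

subsection \<open>The field generated by a matrix with irreducible minimal polynomial\<close>

locale irreducible_min_poly =
  fixes X :: "'a::{finite,field}^'n::finite^'n" and f :: "'a poly"
  assumes min_poly: "is_min_poly X f" and irreducible: "irreducible f" and coeff_0: "coeff f 0 \<noteq> 0"
begin

definition K :: "('a^'n^'n) set" where
  "K = range (\<lambda>p. poly_mat p X)"

lemma poly_mat_f: "poly_mat f X = 0"
  using min_poly by (simp add: is_min_poly_def)

lemma f_nonzero: "f \<noteq> 0"
  using min_poly by (auto simp: is_min_poly_def)

lemma degree_f_pos: "degree f > 0"
  using irreducible f_nonzero is_unit_iff_degree by (auto simp: irreducible_def)

lemma poly_mat_mod_f: "poly_mat (p mod f) X = poly_mat p X"
  by (simp add: minus_div_mult_eq_mod[symmetric] poly_mat_diff poly_mat_mult poly_mat_f)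

lemma poly_mat_eq_0_iff: "poly_mat p X = 0 \<longleftrightarrow> f dvd p"
proof
  assume p: "poly_mat p X = 0"
  show "f dvd p"
  proof (rule ccontr)
    assume "\<not> f dvd p"
    then have "p mod f \<noteq> 0" by (simp add: mod_eq_0_iff_dvd)
    moreover have "poly_mat (p mod f) X = 0" using p by (simp add: poly_mat_mod_f)
    ultimately have "degree f \<le> degree (p mod f)" using min_poly by (simp add: is_min_poly_def)
    moreover have "degree (p mod f) < degree f" using degree_mod_less[OF f_nonzero, of p] \<open>p mod f \<noteq> 0\<close>
      by simp
    ultimately show False by simp
  qed
qed (auto elim!: dvdE simp: poly_mat_mult poly_mat_f)

lemma K_poly_mat [intro, simp]: "poly_mat p X \<in> K"
  by (simp add: K_def)

lemma K_E:
  assumes "A \<in> K" obtains p where "A = poly_mat p X"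
  using assms by (auto simp: K_def)

lemma K_mat [simp]: "mat c \<in> K"
  using K_poly_mat[of "[:c:]"] by simp

lemma K_0 [simp]: "0 \<in> K"
  using K_mat[of 0] by simp

lemma K_mat_pow [simp]: "mat_pow X i \<in> K"
  by (metis K_poly_mat poly_mat_monom)

lemma K_X [simp]: "X \<in> K"
  using K_poly_mat[of "[:0, 1:]"] by (simp add: poly_mat_t)

lemma K_add [simp]: "A \<in> K \<Longrightarrow> B \<in> K \<Longrightarrow> A + B \<in> K"
  by (metis K_E K_poly_mat poly_mat_add)

lemma K_mult [simp]: "A \<in> K \<Longrightarrow> B \<in> K \<Longrightarrow> A ** B \<in> K"
  by (metis K_E K_poly_mat poly_mat_mult)

lemma K_diff [simp]: "A \<in> K \<Longrightarrow> B \<in> K \<Longrightarrow> A - B \<in> K"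
  by (metis K_E K_poly_mat poly_mat_diff)

lemma K_poly_mat_of [simp]: "B \<in> K \<Longrightarrow> poly_mat p B \<in> K"
  by (induction p) (simp_all add: poly_mat_pCons)

lemma K_sum [simp]: "(\<And>i. i \<in> S \<Longrightarrow> F i \<in> K) \<Longrightarrow> sum F S \<in> K"
  by (induction S rule: infinite_finite_induct) auto

lemma K_commute: "A \<in> K \<Longrightarrow> B \<in> K \<Longrightarrow> A ** B = B ** A"
  by (metis K_E poly_mat_commute)

lemma finite_K [simp]: "finite K"
  by (rule finite_subset[OF subset_UNIV finite_class.finite_UNIV])

lemma K_no_zero_divisors:
  assumes "A \<in> K" "B \<in> K" "A ** B = 0" shows "A = 0 \<or> B = 0"
proof -
  obtain p q where pq: "A = poly_mat p X" "B = poly_mat q X" using assms by (auto elim!: K_E)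
  then have "f dvd p * q" using assms by (simp add: poly_mat_eq_0_iff[symmetric] poly_mat_mult)
  then have "f dvd p \<or> f dvd q"
    using field_poly_irreducible_imp_prime[OF irreducible] by (simp add: prime_elem_dvd_mult_iff)
  then show ?thesis using pq by (auto simp: poly_mat_eq_0_iff)
qed

lemma K_inverse:
  assumes "A \<in> K" "A \<noteq> 0" obtains B where "B \<in> K" "B ** A = mat 1"
proof -
  obtain p where p: "A = poly_mat p X" using assms by (auto elim!: K_E)
  then have "\<not> f dvd p" using assms by (simp add: poly_mat_eq_0_iff[symmetric])
  then obtain u v where "u * p + v * f = 1" using irreducible_bezout[OF irreducible] by blast
  then have "poly_mat u X ** A = mat 1"
    using p by (metis poly_mat_1 poly_mat_add poly_mat_mult poly_mat_f times0_right add_0_right)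
  then show ?thesis using that by blast
qed

definition Xinv :: "'a^'n^'n" where
  "Xinv = matrix_inv X"

lemma Xinv: "Xinv \<in> K" "Xinv ** X = mat 1" "X ** Xinv = mat 1"
proof -
  obtain r where r: "Xinv = poly_mat r X" and inv: "invertible X"
    using matrix_inv_eq_poly_mat[OF poly_mat_f coeff_0] unfolding Xinv_def by blast
  show "Xinv \<in> K" using r by simp
  show "Xinv ** X = mat 1" "X ** Xinv = mat 1" using matrix_inv_mult[OF inv] by (simp_all add: Xinv_def)
qed

lemma K_eq_poly_mat_degree_less:
  assumes "A \<in> K" obtains p where "degree p < degree f" "A = poly_mat p X"
proof -
  obtain p where p: "A = poly_mat p X" using assms by (auto elim!: K_E)
  have "degree (p mod f) < degree f"
    using degree_mod_less[OF f_nonzero, of p] degree_f_pos by (cases "p mod f = 0") auto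
  then show ?thesis using that p poly_mat_mod_f by metis
qed

lemma poly_mat_inj_degree_less:
  assumes "degree p < degree f" "degree q < degree f" "poly_mat p X = poly_mat q X"
  shows "p = q"
proof (rule ccontr)
  assume "p \<noteq> q"
  moreover have "f dvd (p - q)" using assms(3) by (simp add: poly_mat_diff poly_mat_eq_0_iff[symmetric])
  ultimately have "degree f \<le> degree (p - q)" by (simp add: dvd_imp_degree_le)
  moreover have "degree (p - q) < degree f"
    using assms(1,2) degree_diff_le_max[of p q] by linarith
  ultimately show False by simp
qed

lemma poly_mat_degree_less_eq_sum:
  assumes "degree p < degree f"
  shows "poly_mat p X = (\<Sum>i<degree f. mat (coeff p i) ** mat_pow X i)"
proof -
  have "{..degree f - 1} = {..<degree f}" using degree_f_pos by auto
  then show ?thesis using poly_mat_eq_sum_atMost[of p "degree f - 1" X] assms by simp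
qed

text \<open>F-linear functionals on K, made unique by vanishing outside K.\<close>

definition K_dual :: "('a^'n^'n \<Rightarrow> 'a) set" where
  "K_dual = {\<psi>. (\<forall>A\<in>K. \<forall>B\<in>K. \<psi> (A + B) = \<psi> A + \<psi> B) \<and> (\<forall>c. \<forall>A\<in>K. \<psi> (mat c ** A) = c * \<psi> A)
      \<and> (\<forall>A. A \<notin> K \<longrightarrow> \<psi> A = 0)}"

lemma finite_K_dual [simp]: "finite K_dual"
  by (rule finite_subset[OF subset_UNIV finite_class.finite_UNIV])

lemma K_dual_add: "\<psi> \<in> K_dual \<Longrightarrow> A \<in> K \<Longrightarrow> B \<in> K \<Longrightarrow> \<psi> (A + B) = \<psi> A + \<psi> B"
  by (simp add: K_dual_def)

lemma K_dual_scale: "\<psi> \<in> K_dual \<Longrightarrow> A \<in> K \<Longrightarrow> \<psi> (mat c ** A) = c * \<psi> A"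
  by (simp add: K_dual_def)

lemma K_dual_diff: "\<psi> \<in> K_dual \<Longrightarrow> A \<in> K \<Longrightarrow> B \<in> K \<Longrightarrow> \<psi> (A - B) = \<psi> A - \<psi> B"
  using K_dual_add[of \<psi> "A - B" B] by simp

lemma K_dual_sum:
  "\<psi> \<in> K_dual \<Longrightarrow> (\<And>i. i \<in> S \<Longrightarrow> F i \<in> K) \<Longrightarrow> \<psi> (sum F S) = (\<Sum>i\<in>S. \<psi> (F i))"
proof (induction S rule: infinite_finite_induct)
  case (insert x S)
  then show ?case by (simp add: K_dual_add)
qed (simp_all add: K_dual_scale[of \<psi> 0 0, simplified])

lemma K_dual_eqI:
  assumes "\<psi> \<in> K_dual" "\<psi>' \<in> K_dual" "\<And>i. i < degree f \<Longrightarrow> \<psi> (mat_pow X i) = \<psi>' (mat_pow X i)"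
  shows "\<psi> = \<psi>'"
proof
  fix A
  show "\<psi> A = \<psi>' A"
  proof (cases "A \<in> K")
    case True
    then obtain p where p: "degree p < degree f" "A = poly_mat p X"
      by (rule K_eq_poly_mat_degree_less)
    have "\<psi> A = (\<Sum>i<degree f. coeff p i * \<psi> (mat_pow X i))"
      using p assms(1) by (simp add: poly_mat_degree_less_eq_sum K_dual_sum K_dual_scale)
    also have "\<dots> = (\<Sum>i<degree f. coeff p i * \<psi>' (mat_pow X i))" using assms(3) by simp
    also have "\<dots> = \<psi>' A"
      using p assms(2) by (simp add: poly_mat_degree_less_eq_sum K_dual_sum K_dual_scale)
    finally show ?thesis .
  qed (use assms in \<open>simp add: K_dual_def\<close>)
qed

lemma card_K_dual_le: "card K_dual \<le> card K"
proof -
  define P where "P \<psi> = (\<Sum>i<degree f. monom (\<psi> (mat_pow X i)) i)" for \<psi> :: "'a^'n^'n \<Rightarrow> 'a"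
  have coeff_P: "coeff (P \<psi>) i = (if i < degree f then \<psi> (mat_pow X i) else 0)" for \<psi> i
    by (simp add: P_def coeff_sum)
  have degree_P: "degree (P \<psi>) < degree f" for \<psi>
  proof -
    have "degree (P \<psi>) \<le> degree f - 1" by (rule degree_le) (auto simp: coeff_P)
    then show ?thesis using degree_f_pos by linarith
  qed
  have "inj_on (\<lambda>\<psi>. poly_mat (P \<psi>) X) K_dual"
  proof (rule inj_onI)
    fix \<psi> \<psi>' assume "\<psi> \<in> K_dual" "\<psi>' \<in> K_dual" "poly_mat (P \<psi>) X = poly_mat (P \<psi>') X"
    moreover from this have "P \<psi> = P \<psi>'" using poly_mat_inj_degree_less degree_P by blast
    ultimately show "\<psi> = \<psi>'" using K_dual_eqI by (metis coeff_P)
  qed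
  moreover have "(\<lambda>\<psi>. poly_mat (P \<psi>) X) ` K_dual \<subseteq> K" by auto
  ultimately show ?thesis using card_inj_on_le[OF _ _ finite_K] by blast
qed

lemma K_dual_one_dimensional:
  assumes \<psi>0: "\<psi>0 \<in> K_dual" and A0: "A0 \<in> K" "\<psi>0 A0 \<noteq> 0" and \<psi>: "\<psi> \<in> K_dual"
  obtains a where "a \<in> K" "\<And>A. A \<in> K \<Longrightarrow> \<psi> A = \<psi>0 (a ** A)"
proof -
  define \<Phi> where "\<Phi> a = (\<lambda>A. if A \<in> K then \<psi>0 (a ** A) else 0)" for a
  have "\<Phi> a \<in> K_dual" if "a \<in> K" for a
  proof -
    have "a ** (mat c ** A) = mat c ** (a ** A)" for c and A :: "'a^'n^'n"
      by (metis mat_matrix_mult_commute matrix_mul_assoc)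
    then show ?thesis unfolding K_dual_def \<Phi>_def using that \<psi>0
      by (auto simp: matrix_add_ldistrib K_dual_add K_dual_scale)
  qed
  then have sub: "\<Phi> ` K \<subseteq> K_dual" by auto
  have "inj_on \<Phi> K"
  proof (rule inj_onI, rule ccontr)
    fix a b assume ab: "a \<in> K" "b \<in> K" "\<Phi> a = \<Phi> b" "a \<noteq> b"
    then obtain e where e: "e \<in> K" "e ** (a - b) = mat 1" using K_inverse[of "a - b"] by auto
    have "\<psi>0 (a ** (e ** A0)) = \<psi>0 (b ** (e ** A0))"
      using fun_cong[OF ab(3), of "e ** A0"] e A0 unfolding \<Phi>_def by simp
    then have "\<psi>0 ((a - b) ** (e ** A0)) = 0"
      using \<psi>0 ab e A0 by (simp add: matrix_diff_rdistrib K_dual_diff)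
    moreover have "(a - b) ** (e ** A0) = A0"
      using e ab K_commute[of e "a - b"] by (simp add: matrix_mul_assoc)
    ultimately show False using A0 by simp
  qed
  then have "card (\<Phi> ` K) = card K_dual"
    using card_image card_K_dual_le card_mono[OF _ sub] by (metis finite_K_dual le_antisym)
  then have "\<Phi> ` K = K_dual" using card_subset_eq[OF _ sub] by simp
  then obtain a where "a \<in> K" "\<psi> = \<Phi> a" using \<psi> by blast
  then show ?thesis using that unfolding \<Phi>_def by simp
qed

text \<open>The involution \<open>\<sigma> (p X) = p (X\<^sup>-\<^sup>1)\<close> of K; by \<open>form_adjoint\<close> it is the adjoint of \<open>p X\<close>
  for every invariant form.\<close>

definition adjoint :: "'a^'n^'n \<Rightarrow> 'a^'n^'n" where
  "adjoint A = poly_mat (SOME p. A = poly_mat p X) Xinv"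

lemma adjoint_in_K [simp]: "adjoint A \<in> K"
  unfolding adjoint_def using Xinv by simp

lemma form_adjoint:
  assumes C: "symmetric_invariant_form C X" and "A \<in> K"
  shows "C (v v* A) w = C v (w v* adjoint A)"
proof -
  obtain p where "A = poly_mat p X" using assms(2) by (auto elim!: K_E)
  then have "A = poly_mat (SOME p. A = poly_mat p X) X" by (metis (mono_tags) someI)
  then show ?thesis unfolding adjoint_def
    using bilinear_form_poly_mat_adjoint[OF symmetric_invariant_formD(1,3)[OF C] Xinv(3,2)] by metis
qed

lemma form_adjoint':
  assumes "symmetric_invariant_form C X" and "A \<in> K"
  shows "C w (v v* A) = C (w v* adjoint A) v"
  using form_adjoint[OF assms, of v w] symmetric_invariant_formD(2)[OF assms(1)] by metis

definition K_subspace :: "('a^'n) set \<Rightarrow> bool" where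
  "K_subspace U \<longleftrightarrow>
     0 \<in> U \<and> (\<forall>u\<in>U. \<forall>w\<in>U. u + w \<in> U) \<and> (\<forall>c. \<forall>u\<in>U. c *s u \<in> U) \<and> (\<forall>u\<in>U. u v* X \<in> U)"

definition nondegenerate_line :: "('a^'n \<Rightarrow> 'a^'n \<Rightarrow> 'a) \<Rightarrow> 'a^'n \<Rightarrow> bool" where
  "nondegenerate_line C v \<longleftrightarrow> (\<exists>A\<in>K. C v (v v* A) \<noteq> 0)"

definition line_perp :: "('a^'n \<Rightarrow> 'a^'n \<Rightarrow> 'a) \<Rightarrow> 'a^'n \<Rightarrow> ('a^'n) set \<Rightarrow> ('a^'n) set" where
  "line_perp C v U = {u\<in>U. \<forall>A\<in>K. C u (v v* A) = 0}"

definition line_functional :: "('a^'n \<Rightarrow> 'a^'n \<Rightarrow> 'a) \<Rightarrow> 'a^'n \<Rightarrow> 'a^'n \<Rightarrow> 'a^'n^'n \<Rightarrow> 'a" where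
  "line_functional C x v = (\<lambda>B. if B \<in> K then C x (v v* B) else 0)"

lemma K_subspace_0: "K_subspace U \<Longrightarrow> 0 \<in> U"
  by (simp add: K_subspace_def)

lemma K_subspace_add: "K_subspace U \<Longrightarrow> u \<in> U \<Longrightarrow> w \<in> U \<Longrightarrow> u + w \<in> U"
  by (simp add: K_subspace_def)

lemma K_subspace_scale: "K_subspace U \<Longrightarrow> u \<in> U \<Longrightarrow> c *s u \<in> U"
  by (simp add: K_subspace_def)

lemma K_subspace_X: "K_subspace U \<Longrightarrow> u \<in> U \<Longrightarrow> u v* X \<in> U"
  by (simp add: K_subspace_def)

lemma K_subspace_diff: "K_subspace U \<Longrightarrow> u \<in> U \<Longrightarrow> w \<in> U \<Longrightarrow> u - w \<in> U"
  using K_subspace_add[of U u "(-1) *s w"] K_subspace_scale[of U w "-1"]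
  by (simp add: vec_eq_iff)

lemma K_subspace_poly_mat: "K_subspace U \<Longrightarrow> u \<in> U \<Longrightarrow> u v* poly_mat p X \<in> U"
proof (induction p arbitrary: u)
  case (pCons a p)
  have "u v* poly_mat (pCons a p) X = a *s u + (u v* poly_mat p X) v* X"
    by (simp add: poly_mat_pCons vector_matrix_mult_add_rdistrib vector_matrix_mult_mat
        vector_matrix_mul_assoc)
  then show ?case using pCons by (simp add: K_subspace_add K_subspace_scale K_subspace_X)
qed (simp add: K_subspace_0)

lemma K_subspace_K: "K_subspace U \<Longrightarrow> u \<in> U \<Longrightarrow> A \<in> K \<Longrightarrow> u v* A \<in> U"
  by (auto elim!: K_E simp: K_subspace_poly_mat)

lemma K_subspace_UNIV: "K_subspace UNIV"
  by (simp add: K_subspace_def)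

lemma line_functional_K_dual: "bilinear_form C \<Longrightarrow> line_functional C x v \<in> K_dual"
  unfolding K_dual_def line_functional_def
  by (auto simp: vector_matrix_mult_add_rdistrib vector_matrix_mult_mat_mult bilinear_add_right
      bilinear_scale_right)

lemma line_functional_K: "A \<in> K \<Longrightarrow> line_functional C x v A = C x (v v* A)"
  by (simp add: line_functional_def)

lemma line_perp_subset: "line_perp C v U \<subseteq> U"
  by (auto simp: line_perp_def)

lemma line_perp_orthogonal_sum:
  assumes C: "symmetric_invariant_form C X"
    and "x \<in> line_perp C v U" "y \<in> line_perp C v U" "A \<in> K" "B \<in> K"
  shows "C (v v* A + x) (v v* B + y) = C (v v* A) (v v* B) + C x y"
  using assms symmetric_invariant_formD(2)[OF C]
    bilinear_orthogonal_sum[OF symmetric_invariant_formD(1)[OF C], of "v v* A" y x "v v* B"]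
  by (auto simp: line_perp_def)

lemma K_subspace_line_perp:
  assumes C: "symmetric_invariant_form C X" and U: "K_subspace U"
  shows "K_subspace (line_perp C v U)"
proof -
  have "C (u v* X) (v v* A) = 0" if "u \<in> line_perp C v U" "A \<in> K" for u A
    using that form_adjoint[OF C K_X, of u "v v* A"]
    by (simp add: vector_matrix_mul_assoc line_perp_def)
  then show ?thesis unfolding K_subspace_def using U symmetric_invariant_formD(1)[OF C]
    by (auto simp: line_perp_def K_subspace_0 K_subspace_add K_subspace_scale K_subspace_X
        bilinear_add_left bilinear_scale_left)
qed

end

definition nondegenerate_on :: "('a::field^'n \<Rightarrow> 'a^'n \<Rightarrow> 'a) \<Rightarrow> ('a^'n) set \<Rightarrow> bool" where
  "nondegenerate_on C U \<longleftrightarrow> (\<forall>u\<in>U. (\<forall>w\<in>U. C u w = 0) \<longrightarrow> u = 0)"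

locale irreducible_invariant_form = irreducible_min_poly X f
  for X :: "'a::{finite,field}^'n::finite^'n" and f +
  fixes \<beta> :: "'a^'n \<Rightarrow> 'a^'n \<Rightarrow> 'a"
  assumes invariant: "symmetric_invariant_form \<beta> X" and nondegenerate: "nondegenerate \<beta>"
    and char2: "(2::'a) = 0"
begin

lemma matrix_eq_by_form:
  assumes "\<And>v w. \<beta> v (w v* P) = \<beta> v (w v* P')" shows "P = P'"
proof (rule matrix_eq_rows)
  fix w
  have "\<beta> (w v* P - w v* P') v = 0" for v
    using assms[of v w] symmetric_invariant_formD[OF invariant]
    by (metis bilinear_diff_right diff_self)
  then have "w v* P - w v* P' = 0" using nondegenerate unfolding nondegenerate_def by blast
  then show "w v* P = w v* P'" by simp
qed

lemma adjoint_mult: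
  assumes "A \<in> K" "B \<in> K" shows "adjoint (A ** B) = adjoint A ** adjoint B"
proof (rule matrix_eq_by_form)
  fix v w
  have "\<beta> v (w v* adjoint (A ** B)) = \<beta> ((v v* A) v* B) w"
    using form_adjoint[OF invariant, of "A ** B"] assms by (simp add: vector_matrix_mul_assoc)
  also have "\<dots> = \<beta> v ((w v* adjoint B) v* adjoint A)"
    using form_adjoint[OF invariant] assms by simp
  finally show "\<beta> v (w v* adjoint (A ** B)) = \<beta> v (w v* (adjoint A ** adjoint B))"
    by (simp add: vector_matrix_mul_assoc K_commute)
qed

lemma adjoint_mat: "adjoint (mat c) = mat c"
  by (rule matrix_eq_by_form)
    (simp add: form_adjoint[OF invariant, symmetric] vector_matrix_mult_mat
      bilinear_scale_left[OF symmetric_invariant_formD(1)[OF invariant]]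
      bilinear_scale_right[OF symmetric_invariant_formD(1)[OF invariant]])

lemma adjoint_X: "adjoint X = Xinv"
proof (rule matrix_eq_by_form)
  fix v w
  have "\<beta> v (w v* adjoint X) = \<beta> (v v* X) ((w v* Xinv) v* X)"
    using form_adjoint[OF invariant K_X] Xinv by (simp add: vector_matrix_mul_assoc)
  then show "\<beta> v (w v* adjoint X) = \<beta> v (w v* Xinv)"
    using symmetric_invariant_formD(3)[OF invariant] by simp
qed

lemma adjoint_adjoint: "A \<in> K \<Longrightarrow> adjoint (adjoint A) = A"
  by (rule matrix_eq_by_form)
    (metis form_adjoint[OF invariant] adjoint_in_K symmetric_invariant_formD(2)[OF invariant])

lemma adjoint_nonzero: "A \<in> K \<Longrightarrow> A \<noteq> 0 \<Longrightarrow> adjoint A \<noteq> 0"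
  using adjoint_adjoint adjoint_mat[of 0] by force

lemma nondegenerate_line_orthogonal_imp_0:
  assumes C: "symmetric_invariant_form C X" and v: "nondegenerate_line C v" and A: "A \<in> K"
    and orth: "\<And>B. B \<in> K \<Longrightarrow> C (v v* A) (v v* B) = 0"
  shows "A = 0"
proof (rule ccontr)
  assume "A \<noteq> 0"
  then obtain s where s: "s \<in> K" "s ** adjoint A = mat 1"
    using K_inverse[of "adjoint A"] adjoint_nonzero A by auto
  obtain B where B: "B \<in> K" "C v (v v* B) \<noteq> 0" using v unfolding nondegenerate_line_def by blast
  have "C (v v* A) (v v* (B ** s)) = C v ((v v* (B ** s)) v* adjoint A)"
    using form_adjoint[OF C A] by simp
  also have "\<dots> = C v (v v* B)"
    using s by (simp add: vector_matrix_mul_assoc matrix_mul_assoc[symmetric])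
  finally show False using orth[of "B ** s"] s B by simp
qed

lemma line_perp_decomposition:
  assumes C: "symmetric_invariant_form C X" and U: "K_subspace U" and v: "v \<in> U"
    "nondegenerate_line C v" and u: "u \<in> U"
  obtains A where "A \<in> K" "u - v v* A \<in> line_perp C v U"
proof -
  note bil = symmetric_invariant_formD(1)[OF C]
  obtain B0 where B0: "B0 \<in> K" "C v (v v* B0) \<noteq> 0" using v unfolding nondegenerate_line_def by blast
  obtain a where a: "a \<in> K" "\<And>B. B \<in> K \<Longrightarrow> line_functional C u v B = line_functional C v v (a ** B)"
    using K_dual_one_dimensional[OF line_functional_K_dual[OF bil, of v v] _ _
        line_functional_K_dual[OF bil, of u v], of B0] B0
    by (auto simp: line_functional_K)
  have "C u (v v* B) = C (v v* adjoint a) (v v* B)" if B: "B \<in> K" for B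
  proof -
    have "C u (v v* B) = C v ((v v* B) v* adjoint (adjoint a))"
      using a B by (simp add: line_functional_K adjoint_adjoint vector_matrix_mul_assoc K_commute)
    also have "\<dots> = C (v v* adjoint a) (v v* B)" using form_adjoint[OF C adjoint_in_K] by simp
    finally show ?thesis .
  qed
  then have "u - v v* adjoint a \<in> line_perp C v U"
    unfolding line_perp_def using U u v bil by (auto simp: K_subspace_diff K_subspace_K bilinear_diff_left)
  then show ?thesis using that adjoint_in_K by blast
qed

lemma line_perp_coordinate_unique:
  assumes C: "symmetric_invariant_form C X" and v: "nondegenerate_line C v" and A: "A \<in> K" "A' \<in> K"
    and perp: "u - v v* A \<in> line_perp C v U" "u - v v* A' \<in> line_perp C v U"
  shows "A = A'"
proof -
  have "v v* (A - A') = (u - v v* A') - (u - v v* A)"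
    by (simp add: vector_matrix_mult_diff_rdistrib)
  then have "C (v v* (A - A')) (v v* B) = 0" if "B \<in> K" for B
    using perp that symmetric_invariant_formD(1)[OF C]
    by (simp add: line_perp_def bilinear_diff_left)
  then show ?thesis using nondegenerate_line_orthogonal_imp_0[OF C v, of "A - A'"] A by simp
qed

lemma nondegenerate_on_line_perp:
  assumes C: "symmetric_invariant_form C X" and U: "K_subspace U" and v: "v \<in> U"
    "nondegenerate_line C v" and nd: "nondegenerate_on C U"
  shows "nondegenerate_on C (line_perp C v U)"
  unfolding nondegenerate_on_def
proof (intro ballI impI)
  fix z assume z: "z \<in> line_perp C v U" and zw: "\<forall>w\<in>line_perp C v U. C z w = 0"
  have "C z u = 0" if u: "u \<in> U" for u
  proof -
    obtain A where A: "A \<in> K" "u - v v* A \<in> line_perp C v U"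
      using line_perp_decomposition[OF C U v u] by blast
    have "C z u = C z (v v* A) + C z (u - v v* A)"
      using symmetric_invariant_formD(1)[OF C] by (simp add: bilinear_diff_right)
    also have "\<dots> = 0" using z zw A unfolding line_perp_def by auto
    finally show ?thesis .
  qed
  then show "z = 0" using nd z unfolding nondegenerate_on_def line_perp_def by auto
qed

lemma card_line_perp:
  assumes C: "symmetric_invariant_form C X" and U: "K_subspace U" and v: "v \<in> U" "nondegenerate_line C v"
  shows "card U = card K * card (line_perp C v U)"
proof -
  let ?h = "\<lambda>(A, w). v v* A + w"
  have "inj_on ?h (K \<times> line_perp C v U)"
  proof (rule inj_onI, clarify)
    fix A w A' w' assume a: "A \<in> K" "w \<in> line_perp C v U" "A' \<in> K" "w' \<in> line_perp C v U"
      "v v* A + w = v v* A' + w'"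
    moreover have "v v* A + w - v v* A = w" by simp
    moreover have "v v* A + w - v v* A' = w'" using a(5) by simp
    ultimately have "A = A'" using line_perp_coordinate_unique[OF C v(2) a(1,3)] by metis
    then show "A = A' \<and> w = w'" using a(5) by simp
  qed
  moreover have "?h ` (K \<times> line_perp C v U) = U"
  proof
    show "?h ` (K \<times> line_perp C v U) \<subseteq> U"
      using U v by (auto simp: line_perp_def K_subspace_add K_subspace_K)
    show "U \<subseteq> ?h ` (K \<times> line_perp C v U)"
    proof
      fix u assume "u \<in> U"
      then obtain A where "A \<in> K" "u - v v* A \<in> line_perp C v U"
        using line_perp_decomposition[OF C U v] by blast
      then show "u \<in> ?h ` (K \<times> line_perp C v U)" by (auto intro!: image_eqI[of _ _ "(A, u - v v* A)"])
    qed
  qed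
  ultimately show ?thesis by (metis card_image card_cartesian_product)
qed

lemma X_plus_Xinv_nonzero:
  assumes "degree f > 1" shows "X + Xinv \<noteq> 0"
proof
  assume "X + Xinv = 0"
  then have "X = - Xinv" by (simp add: eq_neg_iff_add_eq_0)
  then have "X ** X = X ** (- Xinv)" by (rule arg_cong)
  also have "\<dots> = - mat 1" using Xinv(3) by (simp add: matrix_uminus_right)
  finally have "X ** X = - mat 1" .
  then have "poly_mat [:1, 0, 1:] X = 0"
    by (simp add: poly_mat_pCons add.commute)
  moreover have "[:1, 0, 1:] = [:1, 1:] * ([:1, 1:] :: 'a poly)"
    using char2 by simp
  ultimately have "f dvd [:1, 1:] * [:1, 1:]" by (simp add: poly_mat_eq_0_iff)
  then have "f dvd [:1, 1:]"
    using prime_elem_dvd_multD[OF field_poly_irreducible_imp_prime[OF irreducible]] by blast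
  then show False using assms dvd_imp_degree_le[of f "[:1, 1:]"] by simp
qed

lemma exists_nondegenerate_line:
  assumes C: "symmetric_invariant_form C X" and U: "K_subspace U" and nd: "nondegenerate_on C U"
    and "U \<noteq> {0}" and deg: "degree f > 1"
  shows "\<exists>v\<in>U. nondegenerate_line C v"
proof (rule ccontr)
  assume "\<not> ?thesis"
  then have iso: "C v (v v* A) = 0" if "v \<in> U" "A \<in> K" for v A
    using that unfolding nondegenerate_line_def by blast
  note bil = symmetric_invariant_formD(1)[OF C]
  \<comment> \<open>polarising the isotropy of all lines\<close>
  have "C a (b v* (X + Xinv)) = 0" if ab: "a \<in> U" "b \<in> U" for a b
  proof -
    have "C (a + b) ((a + b) v* X) = 0" using iso ab U by (simp add: K_subspace_add)
    then have "C a (b v* X) + C b (a v* X) = 0"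
      using iso ab bil by (simp add: vector_matrix_left_distrib bilinear_add_left bilinear_add_right)
    moreover have "C b (a v* X) = C a (b v* Xinv)"
      using form_adjoint'[OF C K_X, of b a] symmetric_invariant_formD(2)[OF C] adjoint_X by simp
    ultimately show ?thesis using bil by (simp add: vector_matrix_mult_add_rdistrib bilinear_add_right)
  qed
  moreover obtain e where e: "e \<in> K" "e ** (X + Xinv) = mat 1"
    using K_inverse[of "X + Xinv"] X_plus_Xinv_nonzero[OF deg] Xinv by auto
  moreover have "(w v* e) v* (X + Xinv) = w" for w
    using e by (simp add: vector_matrix_mul_assoc)
  ultimately have "C a w = 0" if "a \<in> U" "w \<in> U" for a w
    using that K_subspace_K[OF U _ e(1)] by metis
  then show False using nd \<open>U \<noteq> {0}\<close> K_subspace_0[OF U] unfolding nondegenerate_on_def by blast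
qed

lemma adjoint_fixed_square:
  assumes a: "a \<in> K" "adjoint a = a"
  obtains b where "b \<in> K" "adjoint b = b" "b ** b = a"
proof -
  define K0 where "K0 = {x\<in>K. adjoint x = x}"
  have sub: "(\<lambda>x. x ** x) ` K0 \<subseteq> K0"
    unfolding K0_def by (auto simp: adjoint_mult)
  \<comment> \<open>squaring is additive in characteristic 2\<close>
  have inj: "inj_on (\<lambda>x. x ** x) K0"
  proof (rule inj_onI)
    fix x y assume xy: "x \<in> K0" "y \<in> K0" "x ** x = y ** y"
    then have K: "x \<in> K" "y \<in> K" unfolding K0_def by auto
    have "(x + y) ** (x + y) = (x ** x + y ** y) + (x ** y + y ** x)"
      by (simp add: matrix_add_ldistrib matrix_add_rdistrib algebra_simps)
    also have "x ** x + y ** y = 0" using xy(3) char2 by (simp add: matrix_add_self_eq_0_char2)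
    also have "x ** y + y ** x = 0" using K_commute[OF K] char2 by (simp add: matrix_add_self_eq_0_char2)
    finally have "(x + y) ** (x + y) = 0" by simp
    then have "x + y = 0" using K_no_zero_divisors[OF K_add[OF K] K_add[OF K]] by simp
    then have "x = - y" by (simp add: eq_neg_iff_add_eq_0)
    then show "x = y" using char2 by (simp add: matrix_uminus_eq_self_char2)
  qed
  have "finite K0"
    by (rule finite_subset[OF subset_UNIV finite_class.finite_UNIV])
  then have "(\<lambda>x. x ** x) ` K0 = K0"
    using card_subset_eq[OF _ sub] card_image[OF inj] by simp
  moreover have "a \<in> K0" using a unfolding K0_def by simp
  ultimately obtain b where "b \<in> K0" "a = b ** b" by blast
  then show ?thesis using that unfolding K0_def by auto
qed

lemma line_functional_adjoint:
  assumes "symmetric_invariant_form C X" "x \<in> K"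
  shows "line_functional C v v (adjoint x) = line_functional C v v x"
  using form_adjoint[OF assms, of v v] symmetric_invariant_formD(2)[OF assms(1)] assms(2)
  by (simp add: line_functional_K)

lemma adjoint_fixed_if_translate_invariant:
  assumes \<phi>: "\<phi> \<in> K_dual" "\<And>x. x \<in> K \<Longrightarrow> \<phi> (adjoint x) = \<phi> x" and B0: "B0 \<in> K" "\<phi> B0 \<noteq> 0"
    and a: "a \<in> K" "\<And>B. B \<in> K \<Longrightarrow> \<phi> (a ** adjoint B) = \<phi> (a ** B)"
  shows "adjoint a = a"
proof (rule ccontr)
  assume "adjoint a \<noteq> a"
  then obtain e where e: "e \<in> K" "e ** (adjoint a - a) = mat 1"
    using K_inverse[of "adjoint a - a"] a by auto
  have "\<phi> (adjoint a ** B) = \<phi> (a ** B)" if "B \<in> K" for B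
    using \<phi>(2)[of "adjoint a ** B"] a that by (simp add: adjoint_mult adjoint_adjoint)
  then have "\<phi> ((adjoint a - a) ** (e ** B0)) = 0"
    using \<phi>(1) a e B0 by (simp add: matrix_diff_rdistrib K_dual_diff)
  moreover have "(adjoint a - a) ** (e ** B0) = B0"
    using e K_commute[of e "adjoint a - a"] a by (simp add: matrix_mul_assoc)
  ultimately show False using B0 by simp
qed

text \<open>Both forms on lines are traces \<open>(A, B) \<mapsto> \<phi> (B \<sigma>(A))\<close> of functionals \<open>\<phi>\<close> on K; these differ
  by a factor \<open>a\<close> fixed by the involution \<open>\<sigma>\<close>, and writing \<open>a = b b\<close> rescales one line onto the other.\<close>

lemma nondegenerate_lines_isometric:
  assumes C: "symmetric_invariant_form C X" and C': "symmetric_invariant_form C' X"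
    and v: "nondegenerate_line C v" and v': "nondegenerate_line C' v'"
  obtains c where "c \<in> K"
    "\<And>A B. A \<in> K \<Longrightarrow> B \<in> K \<Longrightarrow> C (v v* (c ** A)) (v v* (c ** B)) = C' (v' v* A) (v' v* B)"
proof -
  define \<phi> where "\<phi> = line_functional C v v"
  define \<phi>' where "\<phi>' = line_functional C' v' v'"
  have L: "\<phi> \<in> K_dual" "\<phi>' \<in> K_dual"
    unfolding \<phi>_def \<phi>'_def
    using line_functional_K_dual symmetric_invariant_formD(1)[OF C] symmetric_invariant_formD(1)[OF C']
    by auto
  obtain B0 where B0: "B0 \<in> K" "\<phi> B0 \<noteq> 0"
    using v unfolding nondegenerate_line_def \<phi>_def by (auto simp: line_functional_K)
  obtain a where a: "a \<in> K" "\<And>B. B \<in> K \<Longrightarrow> \<phi>' B = \<phi> (a ** B)"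
    using K_dual_one_dimensional[OF L(1) B0 L(2)] by blast
  have "\<phi> (a ** adjoint B) = \<phi> (a ** B)" if "B \<in> K" for B
    using a(2)[of "adjoint B"] a(2)[of B] line_functional_adjoint[OF C' that, of v'] that
    by (simp add: \<phi>'_def)
  then have "adjoint a = a"
    using adjoint_fixed_if_translate_invariant[OF L(1) _ B0 a(1)] line_functional_adjoint[OF C]
    by (simp add: \<phi>_def)
  then obtain b where b: "b \<in> K" "adjoint b = b" "b ** b = a"
    using adjoint_fixed_square a(1) by blast
  have "C (v v* (b ** A)) (v v* (b ** B)) = C' (v' v* A) (v' v* B)" if AB: "A \<in> K" "B \<in> K" for A B
  proof -
    have "(b ** B) ** adjoint (b ** A) = (b ** B) ** (b ** adjoint A)"
      using b AB by (simp add: adjoint_mult)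
    also have "\<dots> = a ** (B ** adjoint A)"
      using b AB K_commute[of B b] by (metis matrix_mul_assoc)
    finally have "C (v v* (b ** A)) (v v* (b ** B)) = \<phi> (a ** (B ** adjoint A))"
      using form_adjoint[OF C] AB b a(1) by (simp add: \<phi>_def line_functional_K vector_matrix_mul_assoc)
    also have "\<dots> = C' (v' v* A) (v' v* B)"
      using a AB form_adjoint[OF C' AB(1)] by (simp add: \<phi>'_def line_functional_K vector_matrix_mul_assoc)
    finally show ?thesis .
  qed
  then show ?thesis using that b(1) by blast
qed

definition line_coord :: "('a^'n \<Rightarrow> 'a^'n \<Rightarrow> 'a) \<Rightarrow> 'a^'n \<Rightarrow> ('a^'n) set \<Rightarrow> 'a^'n \<Rightarrow> 'a^'n^'n" where
  "line_coord C v U u = (THE A. A \<in> K \<and> u - v v* A \<in> line_perp C v U)"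

definition perp_proj :: "('a^'n \<Rightarrow> 'a^'n \<Rightarrow> 'a) \<Rightarrow> 'a^'n \<Rightarrow> ('a^'n) set \<Rightarrow> 'a^'n \<Rightarrow> 'a^'n" where
  "perp_proj C v U u = u - v v* line_coord C v U u"

context
  fixes C v U
  assumes C: "symmetric_invariant_form C X" and U: "K_subspace U"
    and v: "v \<in> U" "nondegenerate_line C v"
begin

lemma line_coord_eqI:
  assumes "A \<in> K" "u - v v* A \<in> line_perp C v U"
  shows "line_coord C v U u = A"
  unfolding line_coord_def
  using assms line_perp_coordinate_unique[OF C v(2)] by blast

lemma line_coord:
  assumes "u \<in> U"
  shows "line_coord C v U u \<in> K" "u - v v* line_coord C v U u \<in> line_perp C v U"
  using line_perp_decomposition[OF C U v assms] line_coord_eqI by metis+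

lemma line_coord_add:
  assumes "a \<in> U" "b \<in> U"
  shows "line_coord C v U (a + b) = line_coord C v U a + line_coord C v U b"
proof (rule line_coord_eqI)
  have "a + b - v v* (line_coord C v U a + line_coord C v U b)
      = (a - v v* line_coord C v U a) + (b - v v* line_coord C v U b)"
    by (simp add: vector_matrix_mult_add_rdistrib)
  then show "a + b - v v* (line_coord C v U a + line_coord C v U b) \<in> line_perp C v U"
    by (metis line_coord assms K_subspace_add[OF K_subspace_line_perp[OF C U]])
qed (use line_coord assms in simp)

lemma line_coord_scale:
  assumes "a \<in> U"
  shows "line_coord C v U (s *s a) = mat s ** line_coord C v U a"
proof (rule line_coord_eqI)
  have "s *s a - v v* (mat s ** line_coord C v U a) = s *s (a - v v* line_coord C v U a)"
    by (simp add: vector_matrix_mult_mat_mult vector_ssub_ldistrib)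
  then show "s *s a - v v* (mat s ** line_coord C v U a) \<in> line_perp C v U"
    by (metis line_coord assms K_subspace_scale[OF K_subspace_line_perp[OF C U]])
qed (use line_coord assms in simp)

lemma line_coord_X:
  assumes "a \<in> U"
  shows "line_coord C v U (a v* X) = line_coord C v U a ** X"
proof (rule line_coord_eqI)
  have "a v* X - v v* (line_coord C v U a ** X) = (a - v v* line_coord C v U a) v* X"
    by (simp add: vector_matrix_mult_diff_distrib vector_matrix_mul_assoc)
  then show "a v* X - v v* (line_coord C v U a ** X) \<in> line_perp C v U"
    by (metis line_coord assms K_subspace_X[OF K_subspace_line_perp[OF C U]])
qed (use line_coord assms in simp)


lemma perp_proj: "u \<in> U \<Longrightarrow> perp_proj C v U u \<in> line_perp C v U"
  using line_coord by (simp add: perp_proj_def)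

lemma perp_proj_add: "a \<in> U \<Longrightarrow> b \<in> U \<Longrightarrow> perp_proj C v U (a + b) = perp_proj C v U a + perp_proj C v U b"
  by (simp add: perp_proj_def line_coord_add vector_matrix_mult_add_rdistrib)

lemma perp_proj_scale: "a \<in> U \<Longrightarrow> perp_proj C v U (s *s a) = s *s perp_proj C v U a"
  by (simp add: perp_proj_def line_coord_scale vector_matrix_mult_mat_mult vector_ssub_ldistrib)

lemma perp_proj_X: "a \<in> U \<Longrightarrow> perp_proj C v U (a v* X) = perp_proj C v U a v* X"
  by (simp add: perp_proj_def line_coord_X vector_matrix_mult_diff_distrib vector_matrix_mul_assoc)

end

definition K_isometry ::
  "('a^'n \<Rightarrow> 'a^'n \<Rightarrow> 'a) \<Rightarrow> ('a^'n \<Rightarrow> 'a^'n \<Rightarrow> 'a) \<Rightarrow> ('a^'n) set \<Rightarrow> ('a^'n) set \<Rightarrow> ('a^'n \<Rightarrow> 'a^'n) \<Rightarrow> bool"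
where
  "K_isometry C C' U U' k \<longleftrightarrow> (\<forall>u\<in>U'. k u \<in> U) \<and> (\<forall>u\<in>U'. k (u v* X) = k u v* X)
     \<and> (\<forall>a\<in>U'. \<forall>b\<in>U'. k (a + b) = k a + k b) \<and> (\<forall>s. \<forall>a\<in>U'. k (s *s a) = s *s k a)
     \<and> (\<forall>a\<in>U'. \<forall>b\<in>U'. C (k a) (k b) = C' a b)"

lemma K_isometry_extend:
  assumes C: "symmetric_invariant_form C X" and C': "symmetric_invariant_form C' X"
    and U: "K_subspace U" and U': "K_subspace U'"
    and v: "v \<in> U" "nondegenerate_line C v" and v': "v' \<in> U'" "nondegenerate_line C' v'"
    and k: "K_isometry C C' (line_perp C v U) (line_perp C' v' U') k"
    and c: "c \<in> K"
      "\<And>A B. A \<in> K \<Longrightarrow> B \<in> K \<Longrightarrow> C (v v* (c ** A)) (v v* (c ** B)) = C' (v' v* A) (v' v* B)"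
  shows "K_isometry C C' U U' (\<lambda>u. v v* (c ** line_coord C' v' U' u) + k (perp_proj C' v' U' u))"
proof -
  define \<pi> where "\<pi> = line_coord C' v' U'"
  define r where "r = perp_proj C' v' U'"
  have \<pi>: "\<pi> u \<in> K" "r u \<in> line_perp C' v' U'" "u = v' v* \<pi> u + r u" if "u \<in> U'" for u
    using line_coord[OF C' U' v' that] perp_proj[OF C' U' v' that]
    unfolding \<pi>_def r_def perp_proj_def by auto
  then have kr: "k (r u) \<in> line_perp C v U" if "u \<in> U'" for u
    using k that unfolding K_isometry_def by blast
  show ?thesis unfolding K_isometry_def \<pi>_def[symmetric] r_def[symmetric]
  proof (intro conjI ballI allI)
    fix u assume u: "u \<in> U'"
    show "v v* (c ** \<pi> u) + k (r u) \<in> U"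
      using \<pi>[OF u] kr[OF u] line_perp_subset c(1) U v
      by (blast intro: K_subspace_add[OF U] K_subspace_K[OF U] K_mult)
    show "v v* (c ** \<pi> (u v* X)) + k (r (u v* X)) = (v v* (c ** \<pi> u) + k (r u)) v* X"
      using line_coord_X[OF C' U' v' u] perp_proj_X[OF C' U' v' u] k \<pi>[OF u]
      by (simp add: K_isometry_def \<pi>_def r_def vector_matrix_left_distrib vector_matrix_mul_assoc
          matrix_mul_assoc)
  next
    fix a b assume ab: "a \<in> U'" "b \<in> U'"
    show "v v* (c ** \<pi> (a + b)) + k (r (a + b)) = v v* (c ** \<pi> a) + k (r a) + (v v* (c ** \<pi> b) + k (r b))"
      using line_coord_add[OF C' U' v' ab] perp_proj_add[OF C' U' v' ab] k \<pi> ab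
      by (simp add: K_isometry_def \<pi>_def r_def matrix_add_ldistrib vector_matrix_mult_add_rdistrib)
    have "C (v v* (c ** \<pi> a) + k (r a)) (v v* (c ** \<pi> b) + k (r b))
        = C (v v* (c ** \<pi> a)) (v v* (c ** \<pi> b)) + C (k (r a)) (k (r b))"
      using line_perp_orthogonal_sum[OF C kr[OF ab(1)] kr[OF ab(2)]] c(1) \<pi> ab by simp
    also have "\<dots> = C' (v' v* \<pi> a + r a) (v' v* \<pi> b + r b)"
      using line_perp_orthogonal_sum[OF C' \<pi>(2)[OF ab(1)] \<pi>(2)[OF ab(2)] \<pi>(1)[OF ab(1)] \<pi>(1)[OF ab(2)]]
        c(2) k \<pi> ab by (simp add: K_isometry_def)
    finally show "C (v v* (c ** \<pi> a) + k (r a)) (v v* (c ** \<pi> b) + k (r b)) = C' a b"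
      using \<pi>(3) ab by metis
  next
    fix s a assume a: "a \<in> U'"
    have "c ** (mat s ** \<pi> a) = mat s ** (c ** \<pi> a)"
      by (metis mat_matrix_mult_commute matrix_mul_assoc)
    then show "v v* (c ** \<pi> (s *s a)) + k (r (s *s a)) = s *s (v v* (c ** \<pi> a) + k (r a))"
      using line_coord_scale[OF C' U' v' a] perp_proj_scale[OF C' U' v' a] k \<pi>[OF a]
      by (simp add: K_isometry_def \<pi>_def r_def vector_matrix_mult_mat_mult vector_add_ldistrib)
  qed
qed

lemma card_K_ge_2: "card K \<ge> 2"
proof -
  have "(mat 1 :: 'a^'n^'n) $ i $ i \<noteq> 0 $ i $ i" for i by (simp add: mat_def)
  then have "card {0, mat 1 :: 'a^'n^'n} = 2" by (metis card_2_iff)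
  moreover have "{0, mat 1} \<subseteq> K" by simp
  ultimately show ?thesis by (metis card_mono finite_K)
qed

lemma K_isometry_exists:
  assumes C: "symmetric_invariant_form C X" and C': "symmetric_invariant_form C' X"
    and deg: "degree f > 1"
  shows "K_subspace U \<Longrightarrow> K_subspace U' \<Longrightarrow> nondegenerate_on C U \<Longrightarrow> nondegenerate_on C' U'
    \<Longrightarrow> card U' = card U \<Longrightarrow> \<exists>k. K_isometry C C' U U' k"
proof (induction "card U" arbitrary: U U' rule: less_induct)
  case less
  note U = \<open>K_subspace U\<close> and U' = \<open>K_subspace U'\<close>
  show ?case
  proof (cases "U = {0}")
    case True
    then obtain x where "U' = {x}" using less.prems(5) card_1_singletonE by auto
    then have "U' = {0}" using K_subspace_0[OF U'] by simp
    then have "K_isometry C C' U U' (\<lambda>_. 0)"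
      using True symmetric_invariant_formD(1)[OF C] symmetric_invariant_formD(1)[OF C']
      by (simp add: K_isometry_def)
    then show ?thesis by blast
  next
    case False
    then obtain v where v: "v \<in> U" "nondegenerate_line C v"
      using exists_nondegenerate_line[OF C U less.prems(3) _ deg] by blast
    define P where "P = line_perp C v U"
    have cU: "card U = card K * card P" unfolding P_def by (rule card_line_perp[OF C U v])
    have P: "K_subspace P" "nondegenerate_on C P"
      unfolding P_def using K_subspace_line_perp[OF C U] nondegenerate_on_line_perp[OF C U v less.prems(3)]
      by auto
    have "0 < card P" using K_subspace_0[OF P(1)] by (auto simp: card_gt_0_iff)
    moreover have "2 * card P \<le> card U" using cU card_K_ge_2 by simp
    ultimately have cPU: "card P < card U" and "card U \<noteq> 1" by linarith+
    then have "U' \<noteq> {0}" using less.prems(5) by auto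
    then obtain v' where v': "v' \<in> U'" "nondegenerate_line C' v'"
      using exists_nondegenerate_line[OF C' U' less.prems(4) _ deg] by blast
    define P' where "P' = line_perp C' v' U'"
    have "card U' = card K * card P'" unfolding P'_def by (rule card_line_perp[OF C' U' v'])
    then have "card P' = card P" using cU less.prems(5) card_K_ge_2 by auto
    moreover have "K_subspace P'" "nondegenerate_on C' P'"
      unfolding P'_def using K_subspace_line_perp[OF C' U'] nondegenerate_on_line_perp[OF C' U' v' less.prems(4)]
      by auto
    ultimately obtain k where "K_isometry C C' P P' k"
      using less.hyps[OF cPU P(1) _ P(2)] by blast
    moreover obtain c where "c \<in> K"
      "\<And>A B. A \<in> K \<Longrightarrow> B \<in> K \<Longrightarrow> C (v v* (c ** A)) (v v* (c ** B)) = C' (v' v* A) (v' v* B)"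
      using nondegenerate_lines_isometric[OF C C' v(2) v'(2)] by blast
    ultimately show ?thesis
      using K_isometry_extend[OF C C' U U' v v'] unfolding P_def P'_def by blast
  qed
qed

lemma isometric_via_centralizer_irreducible:
  assumes deg: "degree f > 1" and C': "symmetric_invariant_form C' X" and nd': "nondegenerate C'"
  shows "isometric_via_centralizer X \<beta> C'"
proof -
  have "nondegenerate_on \<beta> UNIV" "nondegenerate_on C' UNIV"
    using nondegenerate nd' by (simp_all add: nondegenerate_on_def nondegenerate_def)
  then obtain k where "K_isometry \<beta> C' UNIV UNIV k"
    using K_isometry_exists[OF invariant C' deg K_subspace_UNIV K_subspace_UNIV] by blast
  then have add: "\<And>a b. k (a + b) = k a + k b" and scale: "\<And>s a. k (s *s a) = s *s k a"
    and kX: "\<And>u. k (u v* X) = k u v* X" and iso: "\<And>a b. \<beta> (k a) (k b) = C' a b"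
    unfolding K_isometry_def by auto
  obtain M where M: "\<And>u. u v* M = k u"
    using additive_homogeneous_imp_matrix[of k, OF add scale] by blast
  have "invertible M"
    using invertible_if_isometry[OF symmetric_invariant_formD(1)[OF invariant] nd'] iso M by simp
  moreover have "M ** X = X ** M"
    by (rule matrix_eq_rows) (simp add: M kX vector_matrix_mul_assoc[symmetric])
  ultimately show ?thesis
    unfolding isometric_via_centralizer_def using M iso by auto
qed

end

subsection \<open>Minimal polynomial \<open>g g*\<close>: a hyperbolic splitting\<close>

context
  fixes D :: "'a::field^'n \<Rightarrow> 'a^'n \<Rightarrow> 'a" and E F :: "'a^'n^'n"
  assumes bil: "bilinear_form D" and EF: "E + F = mat 1"
    and isotropic: "\<And>x y. D (x v* E) (y v* E) = 0" "\<And>x y. D (x v* F) (y v* F) = 0"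
begin

lemma isotropic_split_right: "D x (y v* F) = D (x v* E) (y v* F)"
proof -
  have "D x (y v* F) = D (x v* E + x v* F) (y v* F)"
    using EF by (simp add: vector_matrix_mult_add_rdistrib[symmetric])
  then show ?thesis using isotropic(2) bil by (simp add: bilinear_add_left)
qed

lemma isotropic_split_left_E: "D (x v* E) y = D (x v* E) (y v* F)"
proof -
  have "D (x v* E) y = D (x v* E) (y v* E + y v* F)"
    using EF by (simp add: vector_matrix_mult_add_rdistrib[symmetric])
  then show ?thesis using isotropic(1) bil by (simp add: bilinear_add_right)
qed

lemma isotropic_split_left_F: "D (x v* F) y = D (x v* F) (y v* E)"
proof -
  have "D (x v* F) y = D (x v* F) (y v* E + y v* F)"
    using EF by (simp add: vector_matrix_mult_add_rdistrib[symmetric])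
  then show ?thesis using isotropic(2) bil by (simp add: bilinear_add_right)
qed

lemma isotropic_split: "D x y = D (x v* E) (y v* F) + D (x v* F) (y v* E)"
proof -
  have "D x y = D (x v* E + x v* F) y"
    using EF by (simp add: vector_matrix_mult_add_rdistrib[symmetric])
  then show ?thesis
    using bil isotropic_split_left_E isotropic_split_left_F by (simp add: bilinear_add_left)
qed

end

lemma representing_matrix_commute:
  fixes X S :: "'a::field^'n^'n"
  assumes X: "invertible X" and C: "symmetric_invariant_form C X" "nondegenerate C"
    and C': "symmetric_invariant_form C' X" and S: "\<And>a w. C (a v* S) w = C' a w"
  shows "S ** X = X ** S"
proof (rule matrix_eq_rows)
  fix a
  have shift: "D (x v* X) w = D x (w v* matrix_inv X)" if "symmetric_invariant_form D X" for D x w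
    using symmetric_invariant_formD(3)[OF that, of x "w v* matrix_inv X"] matrix_inv_mult[OF X]
    by (simp add: vector_matrix_mul_assoc)
  have "C (a v* (S ** X)) w = C (a v* (X ** S)) w" for w
    using shift[OF C(1), of "a v* S" w] shift[OF C', of a w] S
    by (simp add: vector_matrix_mul_assoc[symmetric])
  then have "C (a v* (S ** X) - a v* (X ** S)) w = 0" for w
    using symmetric_invariant_formD(1)[OF C(1)] by (simp add: bilinear_diff_left)
  then have "a v* (S ** X) - a v* (X ** S) = 0"
    using C(2) unfolding nondegenerate_def by blast
  then show "a v* (S ** X) = a v* (X ** S)" by simp
qed

lemma isometric_via_centralizer_split:
  fixes X E F :: "'a::{finite,field}^'n::finite^'n"
  assumes X: "invertible X"
    and EF: "E + F = mat 1" "E ** F = 0" "F ** E = 0" "E ** X = X ** E" "F ** X = X ** F"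
    and C: "symmetric_invariant_form C X" "nondegenerate C"
    and C': "symmetric_invariant_form C' X" "nondegenerate C'"
    and isoC: "\<And>x y. C (x v* E) (y v* E) = 0" "\<And>x y. C (x v* F) (y v* F) = 0"
    and isoC': "\<And>x y. C' (x v* E) (y v* E) = 0" "\<And>x y. C' (x v* F) (y v* F) = 0"
  shows "isometric_via_centralizer X C C'"
proof -
  note bil = symmetric_invariant_formD(1)[OF C(1)] and bil' = symmetric_invariant_formD(1)[OF C'(1)]
  obtain S where S: "\<And>a w. C (a v* S) w = C' a w"
    using nondegenerate_form_represents[OF bil C(2) bil'] by blast
  have "S ** X = X ** S" by (rule representing_matrix_commute[OF X C(1,2) C'(1) S])
  define k where "k = S ** E + F"
  have "k ** X = X ** k"
    unfolding k_def using EF(4,5) \<open>S ** X = X ** S\<close>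
    by (simp add: matrix_add_rdistrib matrix_add_ldistrib matrix_mul_assoc[symmetric])
      (simp add: matrix_mul_assoc)
  have EE: "E ** E = E" and FF: "F ** F = F"
    using EF(1-3) matrix_add_ldistrib[of E E F] matrix_add_rdistrib[of E F F] by simp_all
  have kE: "(a v* k) v* E = (a v* S) v* E" and kF: "(a v* k) v* F = a v* F" for a
    using EE FF EF(2,3)
    by (simp_all add: k_def vector_matrix_mult_add_rdistrib vector_matrix_left_distrib
        vector_matrix_mul_assoc matrix_mul_assoc[symmetric])
  have iso: "C (a v* k) (b v* k) = C' a b" for a b
  proof -
    have "C (a v* k) (b v* k) = C ((a v* S) v* E) (b v* F) + C (a v* F) ((b v* S) v* E)"
      using isotropic_split[OF bil EF(1) isoC, of "a v* k" "b v* k"] by (simp add: kE kF)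
    also have "C ((a v* S) v* E) (b v* F) = C' a (b v* F)"
      using isotropic_split_right[OF bil EF(1) isoC, of "a v* S" b] S by simp
    also have "C (a v* F) ((b v* S) v* E) = C' (a v* F) b"
      using isotropic_split_right[OF bil EF(1) isoC, of "b v* S" a] S
        symmetric_invariant_formD(2)[OF C(1)] symmetric_invariant_formD(2)[OF C'(1)] by metis
    also have "C' a (b v* F) + C' (a v* F) b = C' a b"
      using isotropic_split[OF bil' EF(1) isoC', of a b] isotropic_split_right[OF bil' EF(1) isoC', of a b]
        isotropic_split_left_F[OF bil' EF(1) isoC', of a b] by simp
    finally show ?thesis .
  qed
  then show ?thesis
    using invertible_if_isometry[OF bil C'(2) iso] \<open>k ** X = X ** k\<close>
    unfolding isometric_via_centralizer_def by blast
qed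

locale hyperbolic_min_poly =
  fixes X :: "'a::{finite,field}^'n::finite^'n" and g :: "'a poly"
  assumes min_poly: "is_min_poly X (g * dual_poly g)" and irreducible: "irreducible g"
    and monic: "lead_coeff g = 1" and coeff_0: "coeff g 0 \<noteq> 0" and not_self_dual: "g \<noteq> dual_poly g"
begin

abbreviation h :: "'a poly" where
  "h \<equiv> dual_poly g"

lemma poly_mat_gh: "poly_mat (g * h) X = 0"
  using min_poly by (simp add: is_min_poly_def)

lemma h_eq: "h = smult (inverse (coeff g 0)) (reflect_poly g)"
  by (simp add: dual_poly_def)

lemma g_eq: "g = smult (coeff g 0) (reflect_poly h)"
  using coeff_0 by (simp add: h_eq reflect_poly_smult)

lemma g_not_dvd_h: "\<not> g dvd h"
proof
  assume "g dvd h"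
  then obtain q where q: "h = g * q" by (elim dvdE)
  have "degree h = degree g" using coeff_0 by (simp add: h_eq)
  moreover have "g \<noteq> 0" "q \<noteq> 0" using monic q coeff_0 by (auto simp: h_eq)
  ultimately have "degree q = 0" using q by (simp add: degree_mult_eq)
  then obtain a where a: "q = [:a:]" by (metis degree_eq_zeroE)
  have "lead_coeff h = 1" using coeff_0 monic by (simp add: h_eq coeff_reflect_poly)
  moreover have "lead_coeff h = lead_coeff g * lead_coeff q" using q by (simp only: lead_coeff_mult)
  ultimately have "a = 1" using a monic by simp
  then show False using q a not_self_dual by simp
qed

definition Xinv_poly :: "'a poly" where
  "Xinv_poly = (SOME r. matrix_inv X = poly_mat r X)"

lemma matrix_inv_X: "matrix_inv X = poly_mat Xinv_poly X" "invertible X"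
proof -
  have "coeff (g * h) 0 \<noteq> 0" using coeff_0 monic by (simp add: h_eq coeff_mult_0)
  then obtain r' where "matrix_inv X = poly_mat r' X" "invertible X"
    using matrix_inv_eq_poly_mat[OF poly_mat_gh] by blast
  then show "matrix_inv X = poly_mat Xinv_poly X" "invertible X"
    unfolding Xinv_poly_def by (auto intro: someI)
qed

lemma poly_mat_isotropic:
  assumes C: "symmetric_invariant_form C X"
    and Z: "poly_mat p (matrix_inv X) ** poly_mat p X = 0"
  shows "C (x v* poly_mat (q * p) X) (y v* poly_mat (q * p) X) = 0"
proof -
  have "poly_mat (q * p) X ** poly_mat (q * p) (matrix_inv X)
      = poly_mat ((q * p) * (pcompose q Xinv_poly * pcompose p Xinv_poly)) X"
    by (simp add: matrix_inv_X poly_mat_pcompose poly_mat_mult pcompose_mult)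
  also have "\<dots> = poly_mat (q * pcompose q Xinv_poly) X ** (poly_mat (pcompose p Xinv_poly) X ** poly_mat p X)"
    by (simp add: poly_mat_mult[symmetric] mult.assoc mult.left_commute mult.commute)
  also have "\<dots> = 0" using Z by (simp add: matrix_inv_X poly_mat_pcompose)
  finally have "(y v* poly_mat (q * p) X) v* poly_mat (q * p) (matrix_inv X) = 0"
    by (simp add: vector_matrix_mul_assoc)
  then show ?thesis
    using bilinear_form_poly_mat_adjoint[OF symmetric_invariant_formD(1,3)[OF C]
        matrix_inv_mult[OF matrix_inv_X(2)], of x "q * p" "y v* poly_mat (q * p) X"]
      symmetric_invariant_formD(1)[OF C] by simp
qed

lemma h_Xinv_mult_h_X_eq_0: "poly_mat h (matrix_inv X) ** poly_mat h X = 0"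
proof -
  have "poly_mat h (matrix_inv X) = mat (inverse (coeff g 0)) ** (mat_pow (matrix_inv X) (degree g) ** poly_mat g X)"
    by (simp add: h_eq poly_mat_smult poly_mat_reflect_poly[OF matrix_inv_mult(2)[OF matrix_inv_X(2)]])
  then have "poly_mat h (matrix_inv X) ** poly_mat h X
      = mat (inverse (coeff g 0)) ** mat_pow (matrix_inv X) (degree g) ** poly_mat (g * h) X"
    by (simp add: matrix_mul_assoc poly_mat_mult)
  then show ?thesis by (simp add: poly_mat_gh)
qed

lemma g_Xinv_mult_g_X_eq_0: "poly_mat g (matrix_inv X) ** poly_mat g X = 0"
proof -
  have "poly_mat g (matrix_inv X) = mat (coeff g 0) ** (mat_pow (matrix_inv X) (degree h) ** poly_mat h X)"
    by (subst g_eq) (simp add: poly_mat_smult poly_mat_reflect_poly[OF matrix_inv_mult(2)[OF matrix_inv_X(2)]])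
  then have "poly_mat g (matrix_inv X) ** poly_mat g X
      = mat (coeff g 0) ** mat_pow (matrix_inv X) (degree h) ** (poly_mat h X ** poly_mat g X)"
    by (simp add: matrix_mul_assoc)
  also have "poly_mat h X ** poly_mat g X = poly_mat (g * h) X"
    by (simp add: poly_mat_mult[symmetric] mult.commute)
  finally show ?thesis by (simp add: poly_mat_gh)
qed

lemma isometric_via_centralizer_hyperbolic:
  assumes "symmetric_invariant_form C X" "nondegenerate C"
    and "symmetric_invariant_form C' X" "nondegenerate C'"
  shows "isometric_via_centralizer X C C'"
proof -
  obtain u v where uv: "u * h + v * g = 1"
    using irreducible_bezout[OF irreducible g_not_dvd_h] by blast
  define E where "E = poly_mat (u * h) X"
  define F where "F = poly_mat (v * g) X"
  have EF1: "E + F = mat 1" unfolding E_def F_def using uv by (metis poly_mat_1 poly_mat_add)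
  have EF0: "E ** F = 0"
  proof -
    have "E ** F = poly_mat (u * v) X ** poly_mat (g * h) X"
      unfolding E_def F_def by (simp add: poly_mat_mult[symmetric] ac_simps)
    then show ?thesis by (simp add: poly_mat_gh)
  qed
  have FE0: "F ** E = 0"
    using EF0 unfolding E_def F_def by (simp add: poly_mat_commute)
  have X: "E ** X = X ** E" "F ** X = X ** F"
    unfolding E_def F_def by (simp_all add: poly_mat_commute_self)
  have iso: "D (x v* E) (y v* E) = 0" "D (x v* F) (y v* F) = 0"
    if "symmetric_invariant_form D X" for D x y
    unfolding E_def F_def using poly_mat_isotropic[OF that] h_Xinv_mult_h_X_eq_0 g_Xinv_mult_g_X_eq_0 by blast+
  show ?thesis
    using isometric_via_centralizer_split[OF matrix_inv_X(2) EF1 EF0 FE0 X assms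
        iso[OF assms(1)] iso[OF assms(3)]] .
qed

end

lemma monic_dvd_irreducible_eq:
  fixes g p :: "'a::field poly"
  assumes "irreducible g" "lead_coeff g = 1" "lead_coeff p = 1" "degree p > 0" "p dvd g"
  shows "g = p"
proof -
  obtain q where q: "g = p * q" using assms(5) by (elim dvdE)
  have "p \<noteq> 0" using assms(3) by auto
  then have "\<not> is_unit p" using assms(4) by (simp add: is_unit_iff_degree)
  then have "is_unit q" using irreducibleD[OF assms(1) q] by blast
  then obtain a where a: "q = [:a:]"
    by (metis is_unit_iff_degree not_is_unit_0 degree_eq_zeroE)
  have "lead_coeff g = lead_coeff p * lead_coeff q" using q by (simp only: lead_coeff_mult)
  then have "a = 1" using a assms(2,3) by simp
  then show ?thesis using q a by simp
qed

lemma t_plus_1_dvd_dual_poly_iff: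
  fixes g :: "'a::field poly"
  assumes "coeff g 0 \<noteq> 0"
  shows "[:1, 1:] dvd dual_poly g \<longleftrightarrow> [:1, 1:] dvd g"
proof -
  have "poly (dual_poly g) (- 1) = inverse (coeff g 0) * (- 1) ^ degree g * poly g (- 1)"
    by (simp add: dual_poly_def poly_reflect_poly_nz)
  then show ?thesis
    using assms poly_eq_0_iff_dvd[of "dual_poly g" "- 1"] poly_eq_0_iff_dvd[of g "- 1"] by simp
qed

lemma t_plus_1_not_dvd_Phi23:
  assumes "f \<in> Phi2 \<union> Phi3" shows "\<not> [:1, 1::'a::field:] dvd f"
proof
  assume dvd: "[:1, 1:] dvd f"
  show False using assms
  proof
    assume "f \<in> Phi2"
    then obtain g where g: "f = g * dual_poly g" "lead_coeff g = 1" "irreducible g" "coeff g 0 \<noteq> 0"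
      "g \<noteq> dual_poly g" unfolding Phi2_def by blast
    have "prime_elem [:1, 1::'a:]" by (rule prime_elem_linear_field_poly) simp
    then have "[:1, 1:] dvd g \<or> [:1, 1:] dvd dual_poly g"
      using dvd g(1) prime_elem_dvd_multD by blast
    then have "g = [:1, 1:]"
      using monic_dvd_irreducible_eq[OF g(3,2)] t_plus_1_dvd_dual_poly_iff[OF g(4)] by auto
    then show False using g(5) by (simp add: dual_poly_def reflect_poly_def)
  next
    assume "f \<in> Phi3"
    then show False using dvd monic_dvd_irreducible_eq[of f "[:1, 1:]"] by (auto simp: Phi3_def)
  qed
qed

lemma invertible_plus_1_if_Phi23:
  assumes "f \<in> Phi2 \<union> Phi3" and "is_min_poly (X::'a::field^'n^'n) f"
  shows "invertible (X + mat 1)"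
proof -
  have "poly_mat f X = 0" "irreducible [:1, 1::'a:]"
    using assms(2) by (simp_all add: is_min_poly_def irreducible_linear_field_poly)
  then show ?thesis
    using invertible_poly_mat_if_not_dvd t_plus_1_not_dvd_Phi23[OF assms(1)] by (metis poly_mat_t_plus_1)
qed

lemma isometric_via_centralizer_Phi23:
  assumes char2: "(2::'a::{finite,field}) = 0" and min_poly: "is_min_poly (X::'a^'n::finite^'n) f"
    and f: "f \<in> Phi2 \<union> Phi3"
    and C: "symmetric_invariant_form C X" "nondegenerate C"
    and C': "symmetric_invariant_form C' X" "nondegenerate C'"
  shows "isometric_via_centralizer X C C'"
  using f
proof
  assume "f \<in> Phi2"
  then obtain g where "f = g * dual_poly g" "lead_coeff g = 1" "irreducible g" "coeff g 0 \<noteq> 0"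
    "g \<noteq> dual_poly g" unfolding Phi2_def by blast
  then interpret hyperbolic_min_poly X g
    using min_poly by unfold_locales auto
  show ?thesis by (rule isometric_via_centralizer_hyperbolic[OF C C'])
next
  assume "f \<in> Phi3"
  then have f: "irreducible f" "coeff f 0 \<noteq> 0" "degree f > 1" unfolding Phi3_def by auto
  then interpret irreducible_invariant_form X f C
    using min_poly C char2 by unfold_locales auto
  show ?thesis by (rule isometric_via_centralizer_irreducible[OF f(3) C'])
qed

subsection \<open>Quadratic forms in characteristic 2\<close>

lemma polar_commute: "polar Q v w = polar Q w v"
  by (simp add: polar_def add.commute)

lemma isom_Q_polar: "g \<in> isom_Q Q \<Longrightarrow> polar Q (v v* g) (w v* g) = polar Q v w"
  by (simp add: isom_Q_def polar_def vector_matrix_left_distrib[symmetric])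

lemma isom_Q_subset_isom_B: "isom_Q Q \<subseteq> isom_B (polar Q)"
  by (auto simp: isom_B_def isom_Q_polar) (simp add: isom_Q_def)

lemma symmetric_invariant_form_polar:
  "quadratic_form Q \<Longrightarrow> X \<in> isom_Q Q \<Longrightarrow> symmetric_invariant_form (polar Q) X"
  by (simp add: symmetric_invariant_form_def quadratic_form_def polar_commute isom_Q_polar)

lemma quadratic_form_eq_polar_char2:
  assumes char2: "(2::'a::field) = 0" and Z: "Z \<in> isom_Q (Q :: 'a^'n::finite \<Rightarrow> 'a)"
    and ZI: "invertible (Z + mat 1)"
  shows "Q u = polar Q ((u v* matrix_inv (Z + mat 1)) v* Z) (u v* matrix_inv (Z + mat 1))"
proof -
  define w where "w = u v* matrix_inv (Z + mat 1)"
  have "u = w v* (Z + mat 1)"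
    unfolding w_def using matrix_inv_mult(2)[OF ZI] by (simp add: vector_matrix_mul_assoc)
  then have "u = w v* Z + w" by (simp add: vector_matrix_mult_add_rdistrib)
  then have "Q u = polar Q (w v* Z) w + (Q (w v* Z) + Q w)" by (simp add: polar_def)
  moreover have "Q (w v* Z) + Q w = 0" using Z char2 by (simp add: isom_Q_def add_self_eq_0_char2)
  ultimately show ?thesis unfolding w_def by simp
qed

lemma isom_Q_if_intertwines_char2:
  assumes char2: "(2::'a::field) = 0"
    and X: "X \<in> isom_Q (Q :: 'a^'n::finite \<Rightarrow> 'a)" "invertible (X + mat 1)"
    and Y: "Y \<in> isom_Q Q" "invertible (Y + mat 1)"
    and h: "\<And>v w. polar Q (v v* h) (w v* h) = polar Q v w" "h ** Y = X ** h"
  shows "Q (v v* h) = Q v"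
proof -
  define P where "P = matrix_inv (X + mat 1)"
  define P' where "P' = matrix_inv (Y + mat 1)"
  have e: "h ** (Y + mat 1) = (X + mat 1) ** h"
    using h(2) by (simp add: matrix_add_ldistrib matrix_add_rdistrib)
  have "P ** h = P ** h ** ((Y + mat 1) ** P')"
    using matrix_inv_mult(1)[OF Y(2)] unfolding P'_def by simp
  also have "\<dots> = P ** (h ** (Y + mat 1)) ** P'" by (simp add: matrix_mul_assoc)
  also have "\<dots> = (P ** (X + mat 1)) ** h ** P'" by (simp add: e matrix_mul_assoc)
  also have "\<dots> = h ** P'" using matrix_inv_mult(2)[OF X(2)] unfolding P_def by simp
  finally have hP: "h ** P' = P ** h" by simp
  have "Q (v v* h) = polar Q (((v v* h) v* P') v* Y) ((v v* h) v* P')"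
    using quadratic_form_eq_polar_char2[OF char2 Y] unfolding P'_def by blast
  also have "(v v* h) v* P' = (v v* P) v* h" by (simp add: vector_matrix_mul_assoc hP)
  also have "((v v* P) v* h) v* Y = ((v v* P) v* X) v* h"
    by (simp add: vector_matrix_mul_assoc h(2) matrix_mul_assoc[symmetric])
  also have "polar Q (((v v* P) v* X) v* h) ((v v* P) v* h) = Q v"
    using h(1) quadratic_form_eq_polar_char2[OF char2 X(1,2)] unfolding P_def by simp
  finally show ?thesis .
qed

lemma centralizer_isom_Q_eq_isom_B_char2:
  assumes "(2::'a::field) = 0" "X \<in> isom_Q (Q :: 'a^'n::finite \<Rightarrow> 'a)" "invertible (X + mat 1)"
  shows "centralizer (isom_Q Q) X = centralizer (isom_B (polar Q)) X"
proof
  show "centralizer (isom_Q Q) X \<subseteq> centralizer (isom_B (polar Q)) X"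
    using isom_Q_subset_isom_B unfolding centralizer_def by blast
  show "centralizer (isom_B (polar Q)) X \<subseteq> centralizer (isom_Q Q) X"
    using isom_Q_if_intertwines_char2[OF assms(1) assms(2,3) assms(2,3)]
    unfolding centralizer_def isom_B_def isom_Q_def by auto
qed

lemma conj_class_subset_isom_Q:
  assumes "X \<in> isom_Q Q"
  shows "conj_class (isom_Q Q) X \<subseteq> conj_class GLV X \<inter> isom_Q Q"
proof
  fix Y assume "Y \<in> conj_class (isom_Q Q) X"
  then obtain g where g: "g \<in> isom_Q Q" "Y = matrix_inv g ** X ** g" unfolding conj_class_def by blast
  then have gi: "invertible g" by (simp add: isom_Q_def)
  note gg = matrix_inv_mult[OF gi]
  have "invertible (matrix_inv g)" using gg invertible_left_inverse by blast
  then have "invertible Y" using g(2) assms gi by (simp add: isom_Q_def invertible_mult)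
  moreover have "Q (v v* Y) = Q v" for v
  proof -
    have "Q (v v* Y) = Q (v v* matrix_inv g)"
      using g assms by (simp add: isom_Q_def vector_matrix_mul_assoc[symmetric])
    also have "\<dots> = Q ((v v* matrix_inv g) v* g)" using g(1) by (simp add: isom_Q_def)
    finally show ?thesis using gg by (simp add: vector_matrix_mul_assoc)
  qed
  ultimately show "Y \<in> conj_class GLV X \<inter> isom_Q Q"
    using g gi unfolding conj_class_def GLV_def isom_Q_def by blast
qed

lemma intertwining_isometry:
  assumes "isometric_via_centralizer X C (\<lambda>a b. C (a v* g) (b v* g))"
    and "invertible g" "g ** Y = X ** g"
  obtains h where "invertible h" "h ** Y = X ** h" "\<And>a b. C (a v* h) (b v* h) = C a b"
proof -
  obtain k where k: "invertible k" "k ** X = X ** k" "\<And>a b. C (a v* k) (b v* k) = C (a v* g) (b v* g)"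
    using assms(1) unfolding isometric_via_centralizer_def by blast
  note kk = matrix_inv_mult[OF k(1)]
  have "matrix_inv k ** X = matrix_inv k ** (X ** k) ** matrix_inv k"
    using kk by (simp add: matrix_mul_assoc[symmetric])
  also have "\<dots> = X ** matrix_inv k"
    using kk by (simp add: k(2)[symmetric] matrix_mul_assoc)
  finally have "(matrix_inv k ** g) ** Y = X ** (matrix_inv k ** g)"
    using assms(3) by (simp add: matrix_mul_assoc[symmetric]) (simp add: matrix_mul_assoc)
  moreover have "invertible (matrix_inv k ** g)"
    using kk assms(2) invertible_left_inverse invertible_mult by blast
  moreover have "C (a v* (matrix_inv k ** g)) (b v* (matrix_inv k ** g)) = C a b" for a b
    using k(3)[of "a v* matrix_inv k" "b v* matrix_inv k"] kk
    by (simp add: vector_matrix_mul_assoc)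
  ultimately show ?thesis using that by blast
qed

lemma transported_polar_form:
  fixes g X :: "'a::field^'n::finite^'n"
  assumes Q: "quadratic_form Q" "nondegenerate (polar Q)" and Y: "Y \<in> isom_Q Q"
    and g: "invertible g" "g ** Y = X ** g"
  shows "symmetric_invariant_form (\<lambda>a b. polar Q (a v* g) (b v* g)) X"
    and "nondegenerate (\<lambda>a b. polar Q (a v* g) (b v* g))"
proof -
  note gg = matrix_inv_mult[OF g(1)]
  have "polar Q ((v v* X) v* g) ((w v* X) v* g) = polar Q ((v v* g) v* Y) ((w v* g) v* Y)" for v w
    by (simp add: vector_matrix_mul_assoc g(2))
  then show "symmetric_invariant_form (\<lambda>a b. polar Q (a v* g) (b v* g)) X"
    using Q(1) isom_Q_polar[OF Y]
    by (simp add: symmetric_invariant_form_def quadratic_form_def bilinear_form_pullback polar_commute)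
  show "nondegenerate (\<lambda>a b. polar Q (a v* g) (b v* g))"
    unfolding nondegenerate_def
  proof (intro allI impI)
    fix a assume a: "\<forall>w. polar Q (a v* g) (w v* g) = 0"
    have "polar Q (a v* g) w = 0" for w
      using a[rule_format, of "w v* matrix_inv g"] gg by (simp add: vector_matrix_mul_assoc)
    then have "a v* g = 0" using Q(2) unfolding nondegenerate_def by blast
    then have "(a v* g) v* matrix_inv g = 0" by simp
    then show "a = 0" using gg by (simp add: vector_matrix_mul_assoc)
  qed
qed

lemma conj_class_isom_Q_char2:
  fixes Q :: "'a::{finite,field}^'n::finite \<Rightarrow> 'a"
  assumes char2: "(2::'a) = 0" and Q: "quadratic_form Q" "nondegenerate (polar Q)"
    and X: "X \<in> isom_Q Q" "invertible (X + mat 1)"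
    and forms_isometric: "\<And>C. symmetric_invariant_form C X \<Longrightarrow> nondegenerate C
      \<Longrightarrow> isometric_via_centralizer X (polar Q) C"
  shows "conj_class GLV X \<inter> isom_Q Q = conj_class (isom_Q Q) X"
proof
  show "conj_class GLV X \<inter> isom_Q Q \<subseteq> conj_class (isom_Q Q) X"
  proof
    fix Y assume "Y \<in> conj_class GLV X \<inter> isom_Q Q"
    then obtain g where g: "invertible g" "Y = matrix_inv g ** X ** g" and Y: "Y \<in> isom_Q Q"
      unfolding conj_class_def GLV_def by blast
    note gg = matrix_inv_mult[OF g(1)]
    have gY: "g ** Y = X ** g" using g(2) gg by (simp add: matrix_mul_assoc)
    obtain h where h: "invertible h" "h ** Y = X ** h" "\<And>a b. polar Q (a v* h) (b v* h) = polar Q a b"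
      using intertwining_isometry[OF forms_isometric[OF transported_polar_form[OF Q Y g(1) gY]] g(1) gY]
      by blast
    have "Y + mat 1 = matrix_inv g ** (X + mat 1) ** g"
      using g(2) gg by (simp add: matrix_add_ldistrib matrix_add_rdistrib)
    moreover have "invertible (matrix_inv g)" using gg(1) invertible_left_inverse by blast
    ultimately have "invertible (Y + mat 1)" using X(2) g(1) by (simp add: invertible_mult)
    then have "h \<in> isom_Q Q"
      using isom_Q_if_intertwines_char2[OF char2 X Y _ h(3,2)] h(1) by (simp add: isom_Q_def)
    have "matrix_inv h ** X ** h = matrix_inv h ** (h ** Y)"
      using h(2) by (simp add: matrix_mul_assoc)
    also have "\<dots> = Y"
      using matrix_inv_mult[OF h(1)] by (simp add: matrix_mul_assoc)
    finally show "Y \<in> conj_class (isom_Q Q) X"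
      using \<open>h \<in> isom_Q Q\<close> unfolding conj_class_def by blast
  qed
qed (rule conj_class_subset_isom_Q[OF X(1)])

lemma min_poly_t_plus_1_char2:
  assumes "(2::'a::field) = 0" and "is_min_poly (X::'a^'n^'n) [:1, 1:]"
  shows "X = mat 1"
proof -
  have "X + mat 1 = 0" using assms(2) by (simp add: is_min_poly_def poly_mat_t_plus_1)
  then have "X = - mat 1" by (simp add: eq_neg_iff_add_eq_0)
  then show ?thesis using matrix_uminus_eq_self_char2[OF assms(1)] by metis
qed

theorem proposition6p1p6:
  fixes Q :: "'a::{finite,field}^'n::finite \<Rightarrow> 'a"
    and X :: "'a^'n^'n" and f :: "'a poly" and m :: nat
  assumes "\<exists>k. CARD('a) = 2 ^ k"
    and "CARD('n) = 2 * m"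
    and "quadratic_form Q"
    and "nondegenerate (polar Q)"
    and "X \<in> isom_Q Q"
    and "semisimple X"
    and "is_min_poly X f"
    and "f \<in> Phi"
  shows "(f \<in> Phi1 \<longrightarrow> X = mat 1 \<and> centralizer (isom_Q Q) X = isom_Q Q)
       \<and> (f \<in> Phi2 \<union> Phi3 \<longrightarrow>
            conj_class GLV X \<inter> isom_Q Q = conj_class (isom_Q Q) X
          \<and> centralizer (isom_Q Q) X = centralizer (isom_B (polar Q)) X)"
proof -
  have char2: "(2::'a) = 0" using assms(1) by (rule two_eq_0_if_card_power_of_two)
  have X: "X \<in> isom_Q Q" and min_poly: "is_min_poly X f" using assms(5,7) .
  show ?thesis
  proof (intro conjI impI)
    assume "f \<in> Phi1"
    then show "X = mat 1" using min_poly_t_plus_1_char2[OF char2] min_poly by (simp add: Phi1_def)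
    then show "centralizer (isom_Q Q) X = isom_Q Q" by (simp add: centralizer_def)
  next
    assume f: "f \<in> Phi2 \<union> Phi3"
    then have "invertible (X + mat 1)" using min_poly by (rule invertible_plus_1_if_Phi23)
    then show "centralizer (isom_Q Q) X = centralizer (isom_B (polar Q)) X"
      and "conj_class GLV X \<inter> isom_Q Q = conj_class (isom_Q Q) X"
      using centralizer_isom_Q_eq_isom_B_char2[OF char2 X]
        conj_class_isom_Q_char2[OF char2 assms(3,4) X _ isometric_via_centralizer_Phi23[OF char2 min_poly f
            symmetric_invariant_form_polar[OF assms(3) X] assms(4)]]
      by auto
  qed
qed

end
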